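(* Let $s\geq 1$ be an integer and $\tau\in\mathbb{C}$. For a function $f(z_1,\dots,z_s)$ define the antisymmetrizer $$\mathcal{A}_{z_1,\ldots,z_s}[f(z_1,\dots,z_s)]=\sum_{\sigma\in S_s}(-1)^{[\sigma]}f(z_{\sigma_1},\dots,z_{\sigma_s}),$$ where $[\sigma]$ denotes the parity of the permutation $\sigma$. Then, as an identity of rational functions in the variables $x_1,\dots,x_s,y_1,\dots,y_s$, $$\mathcal{A}_{x_1,\dots,x_s}\mathcal{A}_{y_1,\dots,y_s}\left[\prod_{j=1}^s \frac{(x_jy_j)^{s-j}}{1-\prod_{l=1}^j x_ly_l}\prod_{1\leq j<k\leq s}(x_jx_k+\tau x_k+1)(y_jy_k+\tau y_k+1)\right] =\prod_{j,k=1}^{s}(x_j+y_k+\tau x_jy_k)\,\det_{1\leq j,k\leq s}\left[\psi(x_j,y_k)\right],$$ where $$\psi(x,y)=\frac{1}{(1-xy)(x+y+\tau xy)}.$$ The antisymmetrization in the $x$'s permutes $x_1,\dots,x_s$ and the one in the $y$'s permutes $y_1,\dots,y_s$, independently. *)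

theory Defs
  imports Complex_Main "HOL-Combinatorics.Permutations" "Jordan_Normal_Form.Determinant"
begin

definition antisym :: "nat \<Rightarrow> ((nat \<Rightarrow> complex) \<Rightarrow> complex) \<Rightarrow> (nat \<Rightarrow> complex) \<Rightarrow> complex" where
  "antisym s f z = (\<Sum>\<sigma> | \<sigma> permutes {1..s}. of_int (sign \<sigma>) * f (\<lambda>i. z (\<sigma> i)))"

definition psi :: "complex \<Rightarrow> complex \<Rightarrow> complex \<Rightarrow> complex" where
  "psi \<tau> x y = 1 / ((1 - x * y) * (x + y + \<tau> * x * y))"

definition lhs_summand :: "nat \<Rightarrow> complex \<Rightarrow> (nat \<Rightarrow> complex) \<Rightarrow> (nat \<Rightarrow> complex) \<Rightarrow> complex" where
  "lhs_summand s \<tau> x y =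
     (\<Prod>j=1..s. (x j * y j) ^ (s - j) / (1 - (\<Prod>l=1..j. x l * y l))) *
     (\<Prod>j\<in>{1..s}. \<Prod>k\<in>{j<..s}. (x j * x k + \<tau> * x k + 1) * (y j * y k + \<tau> * y k + 1))"

end

theory Submission
  imports Defs
begin

(* Since the full product of the factors x_j + y_k + tau x_j y_k is symmetric in y, the right-hand side
   is the antisymmetrization in y of the kernel

     K(x, y) = prod_j 1 / (1 - x_j y_j) * prod_{j <> k} (x_j + y_k + tau x_j y_k).

   Both sides then satisfy the same recursion in s, obtained by expanding the antisymmetrizers over the
   transpositions that move the last index: the left-hand side by the shape of its summand, the kernel
   because its recurrence holds up to a sum, over nonempty S, of factors invariant under permuting the
   y_k with k in S times a "defect" whose antisymmetrization over S vanishes. This vanishing reduces, by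
   Laplace expansion of Vandermonde determinants, to the identity

     A_z [prod_{j <> k} (x_j + z_k + tau x_j z_k)] = V(x) V(z),

   which holds because the corresponding determinant factors through the Vandermonde matrix of x and is
   symmetric in x and z. *)

section \<open>Antisymmetrization over a set of indices\<close>

definition antisym_on :: "'i set \<Rightarrow> (('i \<Rightarrow> 'a) \<Rightarrow> 'b::comm_ring_1) \<Rightarrow> ('i \<Rightarrow> 'a) \<Rightarrow> 'b" where
  "antisym_on I f z = (\<Sum>\<pi> | \<pi> permutes I. of_int (sign \<pi>) * f (z \<circ> \<pi>))"

lemma antisym_eq_antisym_on: "antisym s f z = antisym_on {1..s} f z"
  unfolding antisym_def antisym_on_def by (simp add: comp_def)

lemma antisym_on_empty [simp]: "antisym_on {} f z = f z"
  unfolding antisym_on_def by (simp add: permutes_empty)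

lemma antisym_on_diff: "antisym_on I (\<lambda>z. f z - g z) y = antisym_on I f y - antisym_on I g y"
  unfolding antisym_on_def by (simp add: right_diff_distrib sum_subtractf)

lemma antisym_on_sum: "antisym_on I (\<lambda>z. \<Sum>i\<in>A. f i z) y = (\<Sum>i\<in>A. antisym_on I (f i) y)"
  unfolding antisym_on_def by (simp add: sum_distrib_left sum.swap[of _ A])

lemma antisym_on_cmult: "antisym_on I (\<lambda>z. c * f z) y = c * antisym_on I f y"
  unfolding antisym_on_def by (simp add: sum_distrib_left mult.left_commute)

lemma antisym_on_cong:
  "(\<And>\<pi>. \<pi> permutes I \<Longrightarrow> f (y \<circ> \<pi>) = g (y \<circ> \<pi>)) \<Longrightarrow> antisym_on I f y = antisym_on I g y"
  unfolding antisym_on_def by (rule sum.cong) auto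

lemma antisym_on_mult_invariant:
  assumes "\<And>\<pi>. \<pi> permutes I \<Longrightarrow> g (y \<circ> \<pi>) = g y"
  shows "antisym_on I (\<lambda>z. g z * f z) y = g y * antisym_on I f y"
  unfolding antisym_on_def sum_distrib_left by (rule sum.cong) (simp_all add: assms)

lemma of_int_sign_mult_self [simp]:
  "of_int (sign p) * of_int (sign p) = (1 :: 'a::comm_ring_1)"
  "of_int (sign p) * (of_int (sign p) * a) = (a :: 'a::comm_ring_1)"
  by (simp_all add: mult.assoc[symmetric] of_int_mult[symmetric])

lemma antisym_on_precompose:
  assumes "finite I" "g permutes I"
  shows "antisym_on I (\<lambda>z. f (z \<circ> g)) y = of_int (sign g) * antisym_on I f y"
proof -
  have "antisym_on I f y = (\<Sum>p | p permutes I. of_int (sign (p \<circ> g)) * f (y \<circ> (p \<circ> g)))"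
    unfolding antisym_on_def by (rule sum_permutations_compose_right[OF assms(2)])
  also have "\<dots> = of_int (sign g) * antisym_on I (\<lambda>z. f (z \<circ> g)) y"
    unfolding antisym_on_def sum_distrib_left using assms
    by (intro sum.cong refl) (simp add: sign_compose permutes_imp_permutation o_assoc)
  finally show ?thesis by simp
qed

text \<open>Averaging over the permutations of \<open>J\<close>: each of them changes \<open>g * h\<close> only by its sign.\<close>
lemma antisym_on_mult_vanishing:
  fixes g h :: "('i \<Rightarrow> 'a) \<Rightarrow> 'b::{idom,ring_char_0}"
  assumes fin: "finite I" and JI: "J \<subseteq> I"
    and g: "\<And>\<pi> z. \<pi> permutes J \<Longrightarrow> g (z \<circ> \<pi>) = g z"
    and h: "\<And>z. antisym_on J h z = 0"
  shows "antisym_on I (\<lambda>z. g z * h z) y = 0"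
proof -
  let ?F = "\<lambda>z. g z * h z"
  have "antisym_on I (\<lambda>z. g z * (of_int (sign p) * h (z \<circ> p))) y = antisym_on I ?F y"
    if p: "p permutes J" for p
  proof -
    have "antisym_on I (\<lambda>z. ?F (z \<circ> p)) y = of_int (sign p) * antisym_on I ?F y"
      by (rule antisym_on_precompose[OF fin permutes_subset[OF p JI]])
    then have "of_int (sign p) * antisym_on I (\<lambda>z. g z * h (z \<circ> p)) y = antisym_on I ?F y"
      using g[OF p] by (simp add: mult.assoc[symmetric])
    then show ?thesis
      by (simp add: antisym_on_cmult[symmetric] mult.left_commute)
  qed
  then have "of_nat (card {p. p permutes J}) * antisym_on I ?F y
      = (\<Sum>p | p permutes J. antisym_on I (\<lambda>z. g z * (of_int (sign p) * h (z \<circ> p))) y)"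
    by simp
  also have "\<dots> = antisym_on I (\<lambda>z. g z * antisym_on J h z) y"
    by (simp add: antisym_on_def sum_distrib_left sum.swap[of _ "{p. p permutes J}"])
  also have "\<dots> = 0"
    using h by (simp add: antisym_on_def)
  finally show ?thesis
    using card_permutations[OF refl finite_subset[OF JI fin]] by simp
qed

lemma antisym_on_insert:
  assumes "finite I" "q \<notin> I"
  shows "antisym_on (insert q I) f y =
    (\<Sum>b\<in>insert q I. (if b = q then 1 else -1) * antisym_on I f (y \<circ> Transposition.transpose q b))"
  unfolding antisym_on_def sum_over_permutations_insert[OF assms] sum_distrib_left
proof (intro sum.cong refl)
  fix b p assume "p \<in> {p. p permutes I}"
  then have "permutation p"
    using assms(1) permutes_imp_permutation by blast
  then show "of_int (sign (Transposition.transpose q b \<circ> p)) * f (y \<circ> (Transposition.transpose q b \<circ> p)) =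
      (if b = q then 1 else -1) * (of_int (sign p) * f (y \<circ> Transposition.transpose q b \<circ> p))"
    by (simp add: sign_compose permutation_swap_id sign_swap_id o_assoc)
qed

lemma antisym_on_insert_invariant_factor:
  assumes "finite I" "q \<notin> I" and g: "\<And>\<pi> z. \<pi> permutes I \<Longrightarrow> g (z \<circ> \<pi>) = g z"
  shows "antisym_on (insert q I) (\<lambda>z. g z * f z) y =
    (\<Sum>b\<in>insert q I. (if b = q then 1 else -1) * g (y \<circ> Transposition.transpose q b) *
       antisym_on I f (y \<circ> Transposition.transpose q b))"
  unfolding antisym_on_insert[OF assms(1,2)] using g
  by (intro sum.cong refl) (simp add: antisym_on_mult_invariant)

lemma antisym_on_bij_betw:
  assumes bij: "bij_betw h J I" and fin: "finite J"
    and F: "\<And>z. F z = G (z \<circ> h)"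
    and G: "\<And>z z'. (\<And>i. i \<in> J \<Longrightarrow> z i = z' i) \<Longrightarrow> G z = G z'"
  shows "antisym_on I F y = antisym_on J G (y \<circ> h)"
proof -
  let ?map = "map_permutation J h"
  have inj: "inj_on h J"
    using bij bij_betw_def by blast
  have bij_inv: "bij_betw (inv_into J h) I J"
    using bij_betw_inv_into[OF bij] .
  have bij_map: "bij_betw ?map {p. p permutes J} {p. p permutes I}"
  proof (rule bij_betw_byWitness[where f' = "map_permutation I (inv_into J h)"])
    show "\<forall>p\<in>{p. p permutes J}. map_permutation I (inv_into J h) (?map p) = p"
      using map_permutation_compose_inv[OF bij] inv_into_f_f[OF inj] by auto
    show "\<forall>p\<in>{p. p permutes I}. ?map (map_permutation I (inv_into J h) p) = p"
      using bij map_permutation_compose_inv[OF bij_inv]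
      by (auto simp: bij_betw_def f_inv_into_f)
    show "?map ` {p. p permutes J} \<subseteq> {p. p permutes I}"
      using map_permutation_permutes[OF bij] by blast
    show "map_permutation I (inv_into J h) ` {p. p permutes I} \<subseteq> {p. p permutes J}"
      using map_permutation_permutes[OF bij_inv] by blast
  qed
  have "antisym_on I F y = (\<Sum>p | p permutes J. of_int (sign (?map p)) * F (y \<circ> ?map p))"
    unfolding antisym_on_def by (rule sum.reindex_bij_betw[OF bij_map, symmetric])
  also have "\<dots> = antisym_on J G (y \<circ> h)"
    unfolding antisym_on_def
  proof (intro sum.cong refl)
    fix p assume "p \<in> {p. p permutes J}"
    then have p: "p permutes J" by simp
    have "F (y \<circ> ?map p) = G (y \<circ> h \<circ> p)"
      unfolding F
    proof (rule G)
      fix i assume "i \<in> J"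
      then show "(y \<circ> ?map p \<circ> h) i = (y \<circ> h \<circ> p) i"
        using map_permutation_apply[OF inj] permutes_in_image[OF p] by simp
    qed
    then show "of_int (sign (?map p)) * F (y \<circ> ?map p) = of_int (sign p) * G (y \<circ> h \<circ> p)"
      using sign_map_permutation[OF inj p fin] by simp
  qed
  finally show ?thesis .
qed

section \<open>Vandermonde determinants\<close>

lemma det_scale_rows:
  fixes A :: "'a::comm_ring_1 mat"
  assumes A: "A \<in> carrier_mat n n"
  shows "det (mat n n (\<lambda>(i,j). d i * A $$ (i,j))) = (\<Prod>i<n. d i) * det A"
proof -
  have "mat n n (\<lambda>(i,j). d i * A $$ (i,j)) = mat\<^sub>r n n (\<lambda>i. d i \<cdot>\<^sub>v row A i)"
    using A by (intro eq_matI) auto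
  moreover have "mat\<^sub>r n n (\<lambda>i. row A i) = A"
    using A by (intro eq_matI) auto
  moreover have "(\<lambda>i. row A i) \<in> {0..<n} \<rightarrow> carrier_vec n"
    using A by auto
  ultimately show ?thesis
    using det_rows_mul[of "\<lambda>i. row A i" n d] by (simp add: atLeast0LessThan)
qed

lemma det_scale_cols:
  fixes A :: "'a::comm_ring_1 mat"
  assumes A: "A \<in> carrier_mat n n"
  shows "det (mat n n (\<lambda>(i,j). A $$ (i,j) * d j)) = det A * (\<Prod>j<n. d j)"
proof -
  have "mat n n (\<lambda>(i,j). A $$ (i,j) * d j) = transpose_mat (mat n n (\<lambda>(i,j). d i * transpose_mat A $$ (i,j)))"
    using A by (intro eq_matI) auto
  then show ?thesis
    using A det_scale_rows[of "transpose_mat A" n d]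
    by (simp add: det_transpose[of _ n] mult.commute)
qed

definition vandermonde :: "nat \<Rightarrow> (nat \<Rightarrow> 'a::comm_ring_1) \<Rightarrow> 'a mat" where
  "vandermonde n y = mat n n (\<lambda>(r,p). y p ^ r)"

lemma vandermonde_carrier [simp]: "vandermonde n y \<in> carrier_mat n n"
  by (simp add: vandermonde_def)

lemma poly_eq_sum_lessThan:
  fixes p :: "'a::comm_ring_1 poly"
  assumes "degree p < n"
  shows "poly p z = (\<Sum>s<n. coeff p s * z ^ s)"
proof -
  have "poly p z = (\<Sum>s\<le>degree p. coeff p s * z ^ s)"
    by (rule poly_altdef)
  also have "\<dots> = (\<Sum>s<n. coeff p s * z ^ s)"
    by (rule sum.mono_neutral_left) (use assms in \<open>auto simp: coeff_eq_0\<close>)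
  finally show ?thesis .
qed

lemma mat_poly_eval_eq_mult_vandermonde:
  fixes f :: "nat \<Rightarrow> 'a::comm_ring_1 poly"
  assumes "\<And>r. r < n \<Longrightarrow> degree (f r) < n"
  shows "mat n n (\<lambda>(r,p). poly (f r) (y p)) = mat n n (\<lambda>(r,s). coeff (f r) s) * vandermonde n y"
proof (rule eq_matI)
  fix r p assume "r < dim_row (mat n n (\<lambda>(r,s). coeff (f r) s) * vandermonde n y)"
    "p < dim_col (mat n n (\<lambda>(r,s). coeff (f r) s) * vandermonde n y)"
  then have r: "r < n" and p: "p < n"
    by (auto simp: vandermonde_def)
  then show "mat n n (\<lambda>(r,p). poly (f r) (y p)) $$ (r,p) =
      (mat n n (\<lambda>(r,s). coeff (f r) s) * vandermonde n y) $$ (r,p)"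
    using poly_eq_sum_lessThan[OF assms[OF r]]
    by (simp add: vandermonde_def scalar_prod_def atLeast0LessThan)
qed (auto simp: vandermonde_def)

lemma det_mat_poly_eval:
  fixes f :: "nat \<Rightarrow> 'a::comm_ring_1 poly"
  assumes "\<And>r. r < n \<Longrightarrow> degree (f r) < n"
  shows "det (mat n n (\<lambda>(r,p). poly (f r) (y p))) =
    det (mat n n (\<lambda>(r,s). coeff (f r) s)) * det (vandermonde n y)"
proof -
  have "det (mat n n (\<lambda>(r,s). coeff (f r) s) * vandermonde n y) =
      det (mat n n (\<lambda>(r,s). coeff (f r) s)) * det (vandermonde n y)"
    by (rule det_mult[of _ n]) auto
  then show ?thesis
    by (simp add: mat_poly_eval_eq_mult_vandermonde[OF assms])
qed

text \<open>Replacing the last row \<open>y\<^sub>p\<^sup>m\<close> by \<open>g(y\<^sub>p)\<close> for the monic \<open>g = (X - y\<^sub>0) \<cdots> (X - y\<^sub>m\<^sub>-\<^sub>1)\<close> does not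
  change the determinant, and kills all entries of that row but the last.\<close>
lemma det_vandermonde_Suc:
  fixes y :: "nat \<Rightarrow> 'a::idom"
  shows "det (vandermonde (Suc m) y) = det (vandermonde m y) * (\<Prod>p<m. y m - y p)"
proof -
  define g where "g = (\<Prod>l<m. [:- y l, 1:])"
  define f where "f r = (if r < m then monom 1 r else g)" for r
  let ?A = "mat (Suc m) (Suc m) (\<lambda>(r,p). poly (f r) (y p))"
  let ?C = "mat (Suc m) (Suc m) (\<lambda>(r,s). coeff (f r) s)"
  have deg_g: "degree g = m"
    unfolding g_def by (subst degree_prod_eq_sum_degree) auto
  have lead_g: "coeff g m = 1"
    using lead_coeff_prod[of "\<lambda>l. [:- y l, 1:]" "{..<m}"] deg_g by (simp add: g_def)
  have deg: "degree (f r) < Suc m" for r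
    using deg_g by (simp add: f_def degree_monom_eq)
  have "det ?C = prod_list (diag_mat ?C)"
    by (rule det_lower_triangular[of "Suc m"]) (auto simp: f_def coeff_eq_0 deg_g)
  also have "\<dots> = 1"
    by (simp add: prod_list_diag_prod f_def lead_g)
  finally have "det (vandermonde (Suc m) y) = det ?A"
    using det_mat_poly_eval[OF deg] by simp
  also have "det ?A = (\<Sum>p<Suc m. ?A $$ (m,p) * cofactor ?A m p)"
    by (rule laplace_expansion_row) auto
  also have "\<dots> = poly g (y m) * cofactor ?A m m"
  proof -
    have "poly g (y p) = 0" if "p < m" for p
      using that by (auto simp: g_def poly_prod)
    then show ?thesis
      by (simp add: f_def)
  qed
  also have "mat_delete ?A m m = vandermonde m y"
    by (intro eq_matI) (auto simp: mat_delete_def vandermonde_def f_def poly_monom)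
  then have "cofactor ?A m m = det (vandermonde m y)"
    by (simp add: cofactor_def)
  finally show ?thesis
    by (simp add: g_def poly_prod mult.commute)
qed

lemma det_vandermonde:
  fixes y :: "nat \<Rightarrow> 'a::idom"
  shows "det (vandermonde n y) = (\<Prod>k<n. \<Prod>j<k. y k - y j)"
  by (induction n) (simp_all add: det_vandermonde_Suc)

lemma det_vandermonde_nonzero:
  fixes y :: "nat \<Rightarrow> 'a::idom"
  assumes "inj_on y {..<n}"
  shows "det (vandermonde n y) \<noteq> 0"
proof -
  have "y k \<noteq> y j" if "j < k" "k < n" for j k
    using assms that unfolding inj_on_def by (metis lessThan_iff less_trans less_irrefl)
  then show ?thesis
    unfolding det_vandermonde by (simp add: prod_zero_iff)
qed

lemma prod_insert_index:
  assumes "p < Suc k"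
  shows "(\<Prod>q<k. g (insert_index p q)) = (\<Prod>l\<in>{0..<Suc k}-{p}. g l)"
proof -
  have "(\<Prod>l\<in>{0..<Suc k}-{p}. g l) = (\<Prod>l\<in>insert_index p ` {0..<k}. g l)"
    using insert_index_image[OF assms] by simp
  also have "\<dots> = (\<Prod>q\<in>{0..<k}. g (insert_index p q))"
    by (rule prod.reindex[OF insert_index_inj_on, unfolded comp_def])
  finally show ?thesis by (simp add: atLeast0LessThan)
qed

text \<open>Laplace expansion along the first row of the matrix with rows \<open>f(y\<^sub>p), y\<^sub>p, \<dots>, y\<^sub>p\<^sup>k\<close>.\<close>
lemma vandermonde_first_row_laplace:
  fixes f :: "'a::comm_ring_1 poly"
  assumes deg: "degree f \<le> k"
  shows "(\<Sum>p<Suc k. (-1)^p * poly f (y p) * (\<Prod>l\<in>{0..<Suc k}-{p}. y l) * det (vandermonde k (y \<circ> insert_index p)))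
         = poly f 0 * det (vandermonde (Suc k) y)"
proof -
  define F where "F r = (if r = 0 then f else monom 1 r)" for r
  let ?A = "mat (Suc k) (Suc k) (\<lambda>(r,p). poly (F r) (y p))"
  let ?C = "mat (Suc k) (Suc k) (\<lambda>(r,s). coeff (F r) s)"
  have degF: "degree (F r) < Suc k" if "r < Suc k" for r
    using deg that by (simp add: F_def degree_monom_eq)
  have minor: "mat_delete ?A 0 p =
      mat k k (\<lambda>(i,j). vandermonde k (y \<circ> insert_index p) $$ (i,j) * y (insert_index p j))" if p: "p < Suc k" for p
    using p by (intro eq_matI) (auto simp: mat_delete_def vandermonde_def F_def poly_monom insert_index_def)
  have "det ?A = (\<Sum>p<Suc k. ?A $$ (0,p) * cofactor ?A 0 p)"
    by (rule laplace_expansion_row) auto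
  also have "\<dots> = (\<Sum>p<Suc k. (-1)^p * poly f (y p) * (\<Prod>l\<in>{0..<Suc k}-{p}. y l) * det (vandermonde k (y \<circ> insert_index p)))"
  proof (intro sum.cong refl)
    fix p assume "p \<in> {..<Suc k}"
    then have p: "p < Suc k" by simp
    have "cofactor ?A 0 p = (-1)^p * (det (vandermonde k (y \<circ> insert_index p)) * (\<Prod>l\<in>{0..<Suc k}-{p}. y l))"
      unfolding cofactor_def minor[OF p] by (simp add: det_scale_cols prod_insert_index[OF p, of y])
    then show "?A $$ (0,p) * cofactor ?A 0 p =
        (-1)^p * poly f (y p) * (\<Prod>l\<in>{0..<Suc k}-{p}. y l) * det (vandermonde k (y \<circ> insert_index p))"
      using p by (simp add: F_def mult_ac)
  qed
  finally have "det ?A = \<dots>" .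
  moreover have "det ?C = poly f 0"
  proof -
    have "det ?C = prod_list (diag_mat ?C)"
      by (rule det_upper_triangular) (auto simp: upper_triangular_def F_def coeff_monom)
    also have "\<dots> = coeff f 0"
      by (simp add: prod_list_diag_prod F_def prod.atLeast0_lessThan_Suc_shift del: prod.op_ivl_Suc)
    finally show ?thesis
      by (simp add: poly_0_coeff_0)
  qed
  ultimately show ?thesis
    using det_mat_poly_eval[OF degF] by simp
qed

definition off_diag :: "'a set \<Rightarrow> ('a \<times> 'a) set" where
  "off_diag A = {(j,k). j \<in> A \<and> k \<in> A \<and> j \<noteq> k}"

lemma finite_off_diag [simp]: "finite A \<Longrightarrow> finite (off_diag A)"
  by (rule finite_subset[of _ "A \<times> A"]) (auto simp: off_diag_def)

lemma off_diag_mono: "A \<subseteq> B \<Longrightarrow> off_diag A \<subseteq> off_diag B"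
  by (auto simp: off_diag_def)

lemma prod_off_diag:
  assumes "finite A"
  shows "(\<Prod>(j,k)\<in>off_diag A. g j k) = (\<Prod>j\<in>A. \<Prod>k\<in>A-{j}. g j k)"
proof -
  have "off_diag A = Sigma A (\<lambda>j. A-{j})"
    by (auto simp: off_diag_def)
  then show ?thesis
    using assms by (simp add: prod.Sigma)
qed

lemma bij_betw_off_diag:
  assumes "bij_betw h A B"
  shows "bij_betw (\<lambda>(j,k). (h j, h k)) (off_diag A) (off_diag B)"
proof -
  have "inj_on h A" "h ` A = B"
    using assms by (auto simp: bij_betw_def)
  then show ?thesis
    unfolding bij_betw_def inj_on_def off_diag_def by (auto simp: image_iff)
qed

lemma prod_off_diag_image:
  assumes "inj_on h A"
  shows "(\<Prod>(j,k)\<in>off_diag (h ` A). g j k) = (\<Prod>(j,k)\<in>off_diag A. g (h j) (h k))"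
  using prod.reindex_bij_betw[OF bij_betw_off_diag[OF inj_on_imp_bij_betw[OF assms]], of "\<lambda>(j,k). g j k"]
  by (simp add: case_prod_beta)

lemma prod_off_diag_insert_index:
  assumes "i < Suc k"
  shows "(\<Prod>(j,l)\<in>off_diag ({0..<Suc k}-{i}). G j l) =
    (\<Prod>(a,b)\<in>off_diag {0..<k}. G (insert_index i a) (insert_index i b))"
  using prod_off_diag_image[OF insert_index_inj_on[of i "{0..<k}"], of G] insert_index_image[OF assms]
  by simp

lemma prod_off_diag_remove:
  assumes fin: "finite N" and SN: "S \<subseteq> N" and iS: "i \<in> S"
  shows "(\<Prod>l\<in>N-S. g (i,l)) * (\<Prod>l\<in>N-S. g (l,i)) * prod g (off_diag (N-{i}))
       = prod g (off_diag N - off_diag S) * prod g (off_diag (S-{i}))"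
proof -
  let ?A = "(\<lambda>l. (i,l)) ` (N-S)" and ?B = "(\<lambda>l. (l,i)) ` (N-S)"
  let ?C = "off_diag (N-{i}) - off_diag (S-{i})"
  have "(\<Prod>l\<in>N-S. g (i,l)) = prod g ?A" "(\<Prod>l\<in>N-S. g (l,i)) = prod g ?B"
    by (simp_all add: prod.reindex inj_on_def)
  moreover have "prod g (off_diag (N-{i})) = prod g ?C * prod g (off_diag (S-{i}))"
    by (rule prod.subset_diff) (use fin SN in \<open>auto intro!: off_diag_mono\<close>)
  moreover have "off_diag N - off_diag S = ?A \<union> (?B \<union> ?C)"
    using SN iS by (auto simp: off_diag_def)
  moreover have "?A \<inter> (?B \<union> ?C) = {}" "?B \<inter> ?C = {}"
    using iS by (auto simp: off_diag_def)
  then have "prod g (?A \<union> (?B \<union> ?C)) = prod g ?A * (prod g ?B * prod g ?C)"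
    using fin by (simp add: prod.union_disjoint)
  ultimately show ?thesis
    by (simp add: mult_ac)
qed

section \<open>An off-diagonal Cauchy-type identity\<close>

definition cfac :: "'a::comm_ring_1 \<Rightarrow> 'a \<Rightarrow> 'a \<Rightarrow> 'a" where
  "cfac \<tau> a b = a + b + \<tau> * a * b"

lemma cfac_commute: "cfac \<tau> a b = cfac \<tau> b a"
  unfolding cfac_def by (simp add: algebra_simps)

lemma cfac_0 [simp]: "cfac \<tau> 0 b = b" "cfac \<tau> a 0 = a"
  unfolding cfac_def by simp_all

definition cauchy_mat :: "nat \<Rightarrow> 'a::comm_ring_1 \<Rightarrow> (nat \<Rightarrow> 'a) \<Rightarrow> (nat \<Rightarrow> 'a) \<Rightarrow> 'a mat" where
  "cauchy_mat m \<tau> x y = mat m m (\<lambda>(j,k). \<Prod>l\<in>{0..<m}-{k}. cfac \<tau> (x j) (y l))"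

lemma cauchy_mat_carrier [simp]: "cauchy_mat m \<tau> x y \<in> carrier_mat m m"
  by (simp add: cauchy_mat_def)

lemma bij_betw_permutes_remove:
  assumes "p permutes A" "j \<in> A"
  shows "bij_betw p (A - {j}) (A - {p j})"
  by (rule bij_betw_DiffI[OF permutes_imp_bij[OF assms(1)]])
    (use assms permutes_in_image[OF assms(1)] in auto)

lemma prod_off_diag_permutes_swap:
  fixes m :: nat
  assumes p: "p permutes {0..<m}"
  shows "(\<Prod>i<m. \<Prod>l\<in>{0..<m}-{p i}. G i l) = (\<Prod>i<m. \<Prod>l\<in>{0..<m}-{inv_into UNIV p i}. G l i)"
proof -
  have "(\<Prod>i<m. \<Prod>l\<in>{0..<m}-{p i}. G i l) = (\<Prod>(i,l)\<in>Sigma {..<m} (\<lambda>i. {0..<m}-{p i}). G i l)"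
    by (subst prod.Sigma) auto
  also have "\<dots> = (\<Prod>(i,l)\<in>Sigma {..<m} (\<lambda>i. {0..<m}-{inv_into UNIV p i}). G l i)"
  proof -
    have "i \<noteq> inv_into UNIV p l" if "l \<noteq> p i" for i l
      using that permutes_inverses[OF p] by metis
    moreover have "i \<noteq> p l" if "l \<noteq> inv_into UNIV p i" for i l
      using that permutes_inverses[OF p] by metis
    ultimately show ?thesis
      by (intro prod.reindex_bij_witness[where i = "\<lambda>(a,b). (b,a)" and j = "\<lambda>(a,b). (b,a)"])
        (auto simp: permutes_inverses[OF p])
  qed
  also have "\<dots> = (\<Prod>i<m. \<Prod>l\<in>{0..<m}-{inv_into UNIV p i}. G l i)"
    by (subst prod.Sigma) auto
  finally show ?thesis .
qed

lemma det_cauchy_mat_commute: "det (cauchy_mat m \<tau> x y) = det (cauchy_mat m \<tau> y x)"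
proof -
  have "det (cauchy_mat m \<tau> y x) =
      (\<Sum>p | p permutes {0..<m}. signof (inv_into UNIV p) * (\<Prod>i = 0..<m. cauchy_mat m \<tau> y x $$ (i, inv_into UNIV p i)))"
    unfolding det_def'[OF cauchy_mat_carrier] by (rule sum_permutations_inverse)
  also have "\<dots> = (\<Sum>p | p permutes {0..<m}. signof p * (\<Prod>i = 0..<m. cauchy_mat m \<tau> x y $$ (i, p i)))"
  proof (intro sum.cong refl)
    fix p assume "p \<in> {p. p permutes {0..<m}}"
    then have p: "p permutes {0..<m}" by simp
    have "(\<Prod>i = 0..<m. cauchy_mat m \<tau> y x $$ (i, inv_into UNIV p i)) =
        (\<Prod>i<m. \<Prod>l\<in>{0..<m}-{inv_into UNIV p i}. cfac \<tau> (y i) (x l))"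
      using permutes_in_image[OF permutes_inv[OF p]] by (simp add: cauchy_mat_def atLeast0LessThan)
    also have "\<dots> = (\<Prod>i = 0..<m. cauchy_mat m \<tau> x y $$ (i, p i))"
      using prod_off_diag_permutes_swap[OF p, of "\<lambda>i l. cfac \<tau> (x i) (y l)"] permutes_in_image[OF p]
      by (simp add: cauchy_mat_def atLeast0LessThan cfac_commute)
    finally show "signof (inv_into UNIV p) * (\<Prod>i = 0..<m. cauchy_mat m \<tau> y x $$ (i, inv_into UNIV p i)) =
        signof p * (\<Prod>i = 0..<m. cauchy_mat m \<tau> x y $$ (i, p i))"
      using sign_inverse[OF permutes_imp_permutation[OF _ p]] by simp
  qed
  finally show ?thesis
    by (simp add: det_def'[OF cauchy_mat_carrier])
qed

text \<open>Row \<open>j\<close> of the matrix evaluates at \<open>x\<^sub>j\<close> the polynomials \<open>P\<^sub>k\<close> (the product of the linear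
  polynomials \<open>y\<^sub>l + (1 + \<tau> y\<^sub>l) X\<close> over \<open>l \<noteq> k\<close>) of degree below \<open>m\<close>, so the determinant
  splits off the Vandermonde determinant of \<open>x\<close>.\<close>
lemma det_cauchy_mat_factor:
  "\<exists>D. \<forall>x. det (cauchy_mat m \<tau> x y) = D * det (vandermonde m x)"
proof -
  define P where "P k = (\<Prod>l\<in>{0..<m}-{k}. [:y l, 1 + \<tau> * y l:])" for k
  have deg: "degree (P k) < m" if "k < m" for k
  proof -
    have "degree (P k) \<le> (\<Sum>l\<in>{0..<m}-{k}. degree [:y l, 1 + \<tau> * y l:])"
      unfolding P_def by (rule order.trans[OF degree_prod_sum_le]) simp_all
    also have "\<dots> \<le> card ({0..<m}-{k})"
      using sum_mono[of "{0..<m}-{k}" "\<lambda>l. degree [:y l, 1 + \<tau> * y l:]" "\<lambda>_. 1"] by simp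
    finally show ?thesis
      using that by simp
  qed
  have "cauchy_mat m \<tau> x y = transpose_mat (mat m m (\<lambda>(k,j). poly (P k) (x j)))" for x
    by (intro eq_matI) (auto simp: cauchy_mat_def P_def poly_prod cfac_def algebra_simps)
  then have "det (cauchy_mat m \<tau> x y) = det (mat m m (\<lambda>(k,s). coeff (P k) s)) * det (vandermonde m x)" for x
    by (simp add: det_transpose[of _ m] det_mat_poly_eval[OF deg])
  then show ?thesis
    by blast
qed

lemma det_cauchy_mat_Suc_zero:
  assumes "x m = 0" "y m = 0"
  shows "det (cauchy_mat (Suc m) \<tau> x y) = (\<Prod>l<m. y l) * ((\<Prod>j<m. x j) * det (cauchy_mat m \<tau> x y))"
proof -
  let ?M = "cauchy_mat (Suc m) \<tau> x y"
  have row: "?M $$ (m,k) = (if k = m then (\<Prod>l<m. y l) else 0)" if k: "k < Suc m" for k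
  proof (cases "k = m")
    case True
    have "{0..<Suc m}-{m} = {..<m}" by auto
    then show ?thesis
      using True assms by (simp add: cauchy_mat_def)
  next
    case False
    then have "m \<in> {0..<Suc m}-{k}" by simp
    then have "(\<Prod>l\<in>{0..<Suc m}-{k}. cfac \<tau> (x m) (y l)) = 0"
      using assms by (intro prod_zero) auto
    then show ?thesis
      using False k by (simp add: cauchy_mat_def)
  qed
  have minor: "mat_delete ?M m m = mat m m (\<lambda>(j,k). x j * cauchy_mat m \<tau> x y $$ (j,k))"
  proof (intro eq_matI)
    fix j k assume "j < dim_row (mat m m (\<lambda>(j,k). x j * cauchy_mat m \<tau> x y $$ (j,k)))"
      "k < dim_col (mat m m (\<lambda>(j,k). x j * cauchy_mat m \<tau> x y $$ (j,k)))"
    then have jk: "j < m" "k < m" by auto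
    then have "{0..<Suc m}-{k} = insert m ({0..<m}-{k})" by auto
    then show "mat_delete ?M m m $$ (j,k) = mat m m (\<lambda>(j,k). x j * cauchy_mat m \<tau> x y $$ (j,k)) $$ (j,k)"
      using jk assms by (simp add: mat_delete_def cauchy_mat_def)
  qed (auto simp: mat_delete_def cauchy_mat_def)
  have "det ?M = (\<Sum>k<Suc m. ?M $$ (m,k) * cofactor ?M m k)"
    by (rule laplace_expansion_row) auto
  also have "\<dots> = (\<Prod>l<m. y l) * det (mat_delete ?M m m)"
    by (simp add: row cofactor_def)
  also have "\<dots> = (\<Prod>l<m. y l) * ((\<Prod>j<m. x j) * det (cauchy_mat m \<tau> x y))"
    unfolding minor by (subst det_scale_rows) auto
  finally show ?thesis .
qed

text \<open>By the factorization and the symmetry, \<open>det\<close> is a constant multiple of the product of the two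
  Vandermonde determinants; the constant is \<open>1\<close> by the specialization \<open>x\<^sub>m = y\<^sub>m = 0\<close>.\<close>
lemma det_cauchy_mat:
  fixes x y :: "nat \<Rightarrow> 'a::field_char_0"
  shows "det (cauchy_mat m \<tau> x y) = det (vandermonde m x) * det (vandermonde m y)"
proof (induction m arbitrary: x y)
  case 0
  then show ?case by simp
next
  case (Suc m)
  let ?V = "\<lambda>z. det (vandermonde (Suc m) z)"
  let ?w = "\<lambda>i. of_nat i :: 'a"
  have Vw: "?V ?w \<noteq> 0"
    by (rule det_vandermonde_nonzero) (auto simp: inj_on_def)
  obtain D where D: "\<And>a b. det (cauchy_mat (Suc m) \<tau> a b) = D b * ?V a"
    using det_cauchy_mat_factor[of "Suc m" \<tau>] by metis
  define \<kappa> where "\<kappa> = D ?w / ?V ?w"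
  have "D b = \<kappa> * ?V b" for b
    using det_cauchy_mat_commute[of "Suc m" \<tau> ?w b] D[of ?w b] D[of b ?w] Vw
    unfolding \<kappa>_def by (simp add: field_simps)
  then have det_M: "det (cauchy_mat (Suc m) \<tau> a b) = \<kappa> * ?V a * ?V b" for a b
    by (simp add: D mult_ac)
  define u where "u i = (if i < m then of_nat (Suc i) else (0::'a))" for i
  have um: "u m = 0"
    by (simp add: u_def)
  let ?c = "(\<Prod>l<m. u l) * det (vandermonde m u)"
  have "?c \<noteq> 0"
    using det_vandermonde_nonzero[of u m] by (auto simp: u_def inj_on_def simp del: of_nat_Suc)
  moreover have "det (cauchy_mat (Suc m) \<tau> u u) = ?c * ?c"
    using det_cauchy_mat_Suc_zero[where x = u and y = u and m = m, OF um um] Suc.IH[of u u] by (simp add: mult_ac)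
  moreover have "?V u = (-1)^m * ?c"
    by (simp add: det_vandermonde_Suc u_def prod_uminus mult_ac del: of_nat_Suc)
  ultimately have "\<kappa> = 1"
    using det_M[of u u] by (simp add: power_mult_distrib[symmetric])
  then show ?case
    using det_M by simp
qed

lemma antisym_on_off_diag_cfac:
  fixes x y :: "nat \<Rightarrow> 'a::field_char_0"
  shows "antisym_on {0..<m} (\<lambda>z. \<Prod>(j,k)\<in>off_diag {0..<m}. cfac \<tau> (x j) (z k)) y =
    det (vandermonde m x) * det (vandermonde m y)"
proof -
  have "antisym_on {0..<m} (\<lambda>z. \<Prod>(j,k)\<in>off_diag {0..<m}. cfac \<tau> (x j) (z k)) y = det (cauchy_mat m \<tau> x y)"
    unfolding antisym_on_def det_def'[OF cauchy_mat_carrier]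
  proof (rule sum.cong[OF refl])
    fix p assume "p \<in> {p. p permutes {0..<m}}"
    then have p: "p permutes {0..<m}" by simp
    have entry: "(\<Prod>k\<in>{0..<m}-{j}. cfac \<tau> (x j) (y (p k))) = cauchy_mat m \<tau> x y $$ (j, p j)"
      if j: "j \<in> {0..<m}" for j
      using prod.reindex_bij_betw[OF bij_betw_permutes_remove[OF p j], of "\<lambda>l. cfac \<tau> (x j) (y l)"]
        j permutes_in_image[OF p, of j]
      by (simp add: cauchy_mat_def)
    have "(\<Prod>(j,k)\<in>off_diag {0..<m}. cfac \<tau> (x j) ((y \<circ> p) k)) = (\<Prod>i = 0..<m. cauchy_mat m \<tau> x y $$ (i, p i))"
      unfolding prod_off_diag[OF finite_atLeastLessThan] by (intro prod.cong refl) (simp add: entry)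
    then show "of_int (sign p) * (\<Prod>(j,k)\<in>off_diag {0..<m}. cfac \<tau> (x j) ((y \<circ> p) k)) =
        signof p * (\<Prod>i = 0..<m. cauchy_mat m \<tau> x y $$ (i, p i))"
      by simp
  qed
  then show ?thesis
    by (simp add: det_cauchy_mat)
qed

section \<open>The defect and its antisymmetrization\<close>

definition efac :: "'a::comm_ring_1 \<Rightarrow> 'a \<Rightarrow> 'a \<Rightarrow> 'a" where
  "efac \<tau> a b = (1 + \<tau> * a) * (1 + \<tau> * b) - a * b"

definition defect_term :: "'a::comm_ring_1 \<Rightarrow> nat set \<Rightarrow> nat \<Rightarrow> (nat \<Rightarrow> 'a) \<Rightarrow> (nat \<Rightarrow> 'a) \<Rightarrow> 'a" where
  "defect_term \<tau> S i x z = efac \<tau> (x i) (z i) ^ (card S - 1) * (\<Prod>k\<in>S-{i}. x k * z k) *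
     (\<Prod>(j,k)\<in>off_diag (S-{i}). cfac \<tau> (x j) (z k))"

definition cauchy_defect :: "'a::comm_ring_1 \<Rightarrow> nat set \<Rightarrow> (nat \<Rightarrow> 'a) \<Rightarrow> (nat \<Rightarrow> 'a) \<Rightarrow> 'a" where
  "cauchy_defect \<tau> S x z = (\<Sum>i\<in>S. defect_term \<tau> S i x z) - (\<Prod>(j,k)\<in>off_diag S. cfac \<tau> (x j) (z k))"

lemma cauchy_defect_cong:
  assumes z: "\<And>i. i \<in> S \<Longrightarrow> z i = z' i"
  shows "cauchy_defect \<tau> S x z = cauchy_defect \<tau> S x z'"
proof -
  have off_diag_eq: "(\<Prod>(j,k)\<in>off_diag A. cfac \<tau> (x j) (z k)) = (\<Prod>(j,k)\<in>off_diag A. cfac \<tau> (x j) (z' k))"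
    if "A \<subseteq> S" for A
    using that z by (intro prod.cong) (auto simp: off_diag_def)
  show ?thesis
    unfolding cauchy_defect_def defect_term_def
  proof (intro arg_cong2[where f = "(-)"] sum.cong refl)
    fix i assume i: "i \<in> S"
    have "(\<Prod>k\<in>S-{i}. x k * z k) = (\<Prod>k\<in>S-{i}. x k * z' k)"
      using z by (intro prod.cong) auto
    then show "efac \<tau> (x i) (z i) ^ (card S - 1) * (\<Prod>k\<in>S-{i}. x k * z k) *
        (\<Prod>(j,k)\<in>off_diag (S-{i}). cfac \<tau> (x j) (z k)) =
      efac \<tau> (x i) (z' i) ^ (card S - 1) * (\<Prod>k\<in>S-{i}. x k * z' k) *
        (\<Prod>(j,k)\<in>off_diag (S-{i}). cfac \<tau> (x j) (z' k))"
      using off_diag_eq[of "S-{i}"] z[OF i] by auto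
  qed (rule off_diag_eq, simp)
qed

lemma cauchy_defect_image:
  assumes inj: "inj_on h T"
  shows "cauchy_defect \<tau> (h ` T) x z = cauchy_defect \<tau> T (x \<circ> h) (z \<circ> h)"
  unfolding cauchy_defect_def defect_term_def sum.reindex[OF inj] card_image[OF inj] prod_off_diag_image[OF inj]
proof (intro arg_cong2[where f = "(-)"] sum.cong refl, unfold comp_apply)
  fix i assume "i \<in> T"
  then have "h ` T - {h i} = h ` (T - {i})"
    using inj by (auto simp: inj_on_def)
  moreover have inj': "inj_on h (T - {i})"
    using inj by (rule inj_on_subset) auto
  ultimately show "efac \<tau> (x (h i)) (z (h i)) ^ (card T - 1) * (\<Prod>k\<in>h ` T - {h i}. x k * z k) *
        (\<Prod>(j,k)\<in>off_diag (h ` T - {h i}). cfac \<tau> (x j) (z k)) =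
      efac \<tau> (x (h i)) (z (h i)) ^ (card T - 1) * (\<Prod>k\<in>T - {i}. x (h k) * z (h k)) *
        (\<Prod>(j,k)\<in>off_diag (T - {i}). cfac \<tau> (x (h j)) (z (h k)))"
    by (simp add: prod.reindex[OF inj'] prod_off_diag_image[OF inj'])
qed (simp add: comp_def)

lemma sum_permutes_insert_index:
  assumes i: "i < Suc k"
  shows "(\<Sum>\<pi> | \<pi> permutes {0..<Suc k}. h \<pi>) =
         (\<Sum>p<Suc k. \<Sum>q | q permutes {0..<k}. h (permutation_insert i p q))"
proof -
  let ?P = "{\<pi>. \<pi> permutes {0..<Suc k}}"
  have "(\<Sum>\<pi>\<in>?P. h \<pi>) = (\<Sum>p<Suc k. \<Sum>\<pi>\<in>{\<pi>. \<pi> \<in> ?P \<and> \<pi> i = p}. h \<pi>)"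
    by (rule sum.group[symmetric]) (use i in \<open>auto simp: finite_permutations dest: permutes_in_image[where x = i]\<close>)
  also have "\<dots> = (\<Sum>p<Suc k. \<Sum>q | q permutes {0..<k}. h (permutation_insert i p q))"
  proof (rule sum.cong[OF refl])
    fix p assume "p \<in> {..<Suc k}"
    then have p: "p < Suc k" by simp
    then show "(\<Sum>\<pi>\<in>{\<pi>. \<pi> \<in> ?P \<and> \<pi> i = p}. h \<pi>) = (\<Sum>q | q permutes {0..<k}. h (permutation_insert i p q))"
      using permutation_fix[OF i p] sum.reindex[OF permutation_insert_inj_on[OF i p], of h]
      by (simp add: comp_def)
  qed
  finally show ?thesis .
qed

lemma permutation_insert_insert_index:
  "permutation_insert i p q (insert_index i a) = insert_index p (q a)"
  unfolding permutation_insert_expand insert_index_def by auto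

lemma defect_term_permutation_insert:
  fixes x y :: "nat \<Rightarrow> 'a::comm_ring_1"
  assumes i: "i < Suc k" and p: "p < Suc k" and q: "q permutes {0..<k}"
  shows "of_int (sign (permutation_insert i p q)) * defect_term \<tau> {0..<Suc k} i x (y \<circ> permutation_insert i p q) =
    (-1)^(i+p) * efac \<tau> (x i) (y p) ^ k * (\<Prod>l\<in>{0..<Suc k}-{i}. x l) * (\<Prod>l\<in>{0..<Suc k}-{p}. y l) *
    (of_int (sign q) * (\<Prod>(a,b)\<in>off_diag {0..<k}. cfac \<tau> (x (insert_index i a)) (y (insert_index p (q b)))))"
proof -
  let ?\<pi> = "permutation_insert i p q"
  have "(\<Prod>l\<in>{0..<Suc k}-{i}. y (?\<pi> l)) = (\<Prod>a<k. y (insert_index p (q a)))"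
    using prod_insert_index[OF i, of "\<lambda>l. y (?\<pi> l)"] by (simp add: permutation_insert_insert_index)
  also have "\<dots> = (\<Prod>l\<in>{0..<Suc k}-{p}. y l)"
    using prod.permute[OF q, of "\<lambda>a. y (insert_index p a)"] prod_insert_index[OF p, of y]
    by (simp add: atLeast0LessThan comp_def)
  finally have "(\<Prod>l\<in>{0..<Suc k}-{i}. x l * y (?\<pi> l)) = (\<Prod>l\<in>{0..<Suc k}-{i}. x l) * (\<Prod>l\<in>{0..<Suc k}-{p}. y l)"
    by (simp add: prod.distrib)
  moreover have "(of_int (sign ?\<pi>) :: 'a) = (-1)^(i+p) * of_int (sign q)"
    using signof_permutation_insert[OF q i p] by simp
  ultimately show ?thesis
    by (simp add: defect_term_def prod_off_diag_insert_index[OF i] permutation_insert_insert_index mult_ac)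
qed

text \<open>Fixing \<open>\<pi> i = p\<close> splits a permutation into \<open>p\<close> and a permutation of the remaining indices,
  and the remaining antisymmetrization is the off-diagonal one in dimension \<open>k\<close>.\<close>
lemma antisym_on_defect_term:
  fixes x y :: "nat \<Rightarrow> 'a::field_char_0"
  assumes i: "i < Suc k"
  shows "antisym_on {0..<Suc k} (defect_term \<tau> {0..<Suc k} i x) y =
    (-1)^i * (\<Prod>l\<in>{0..<Suc k}-{i}. x l) * det (vandermonde k (x \<circ> insert_index i)) *
    (\<Sum>p<Suc k. (-1)^p * efac \<tau> (x i) (y p) ^ k * (\<Prod>l\<in>{0..<Suc k}-{p}. y l) *
       det (vandermonde k (y \<circ> insert_index p)))"
    (is "antisym_on _ ?t y = _")
proof -
  have "antisym_on {0..<Suc k} ?t y = (\<Sum>p<Suc k. \<Sum>q | q permutes {0..<k}.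
      of_int (sign (permutation_insert i p q)) * ?t (y \<circ> permutation_insert i p q))"
    unfolding antisym_on_def by (rule sum_permutes_insert_index[OF i])
  also have "\<dots> = (\<Sum>p<Suc k. (-1)^i * (\<Prod>l\<in>{0..<Suc k}-{i}. x l) * det (vandermonde k (x \<circ> insert_index i)) *
      ((-1)^p * efac \<tau> (x i) (y p) ^ k * (\<Prod>l\<in>{0..<Suc k}-{p}. y l) * det (vandermonde k (y \<circ> insert_index p))))"
  proof (intro sum.cong refl)
    fix p assume "p \<in> {..<Suc k}"
    then have p: "p < Suc k" by simp
    let ?x = "x \<circ> insert_index i" and ?y = "y \<circ> insert_index p"
    let ?c = "(-1)^(i+p) * efac \<tau> (x i) (y p) ^ k * (\<Prod>l\<in>{0..<Suc k}-{i}. x l) * (\<Prod>l\<in>{0..<Suc k}-{p}. y l)"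
    have "(\<Sum>q | q permutes {0..<k}. of_int (sign (permutation_insert i p q)) * ?t (y \<circ> permutation_insert i p q))
        = ?c * antisym_on {0..<k} (\<lambda>z. \<Prod>(a,b)\<in>off_diag {0..<k}. cfac \<tau> (?x a) (z b)) ?y"
      unfolding antisym_on_def sum_distrib_left
    proof (rule sum.cong[OF refl])
      fix q assume "q \<in> {q. q permutes {0..<k}}"
      then show "of_int (sign (permutation_insert i p q)) * ?t (y \<circ> permutation_insert i p q) =
          ?c * (of_int (sign q) * (\<Prod>(a,b)\<in>off_diag {0..<k}. cfac \<tau> (?x a) ((?y \<circ> q) b)))"
        using defect_term_permutation_insert[OF i p, of q \<tau> x y] by simp
    qed
    then show "(\<Sum>q | q permutes {0..<k}. of_int (sign (permutation_insert i p q)) * ?t (y \<circ> permutation_insert i p q))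
        = (-1)^i * (\<Prod>l\<in>{0..<Suc k}-{i}. x l) * det (vandermonde k ?x) *
          ((-1)^p * efac \<tau> (x i) (y p) ^ k * (\<Prod>l\<in>{0..<Suc k}-{p}. y l) * det (vandermonde k ?y))"
      by (simp add: antisym_on_off_diag_cfac power_add comp_def mult_ac)
  qed
  finally show ?thesis
    by (simp only: sum_distrib_left)
qed

lemma degree_linear_power_le: "degree ([:a, b:] ^ k) \<le> k"
  using degree_power_le[of "[:a, b:]" k] by (cases "b = 0") auto

text \<open>Both sums collapse by Laplace expansion, since \<open>efac \<tau> a z\<close> and \<open>1 + \<tau> z\<close> are linear in \<open>z\<close>.\<close>
lemma sum_antisym_on_defect_terms:
  fixes x y :: "nat \<Rightarrow> 'a::field_char_0"
  shows "(\<Sum>i\<in>{0..<Suc k}. antisym_on {0..<Suc k} (defect_term \<tau> {0..<Suc k} i x) y) =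
    det (vandermonde (Suc k) x) * det (vandermonde (Suc k) y)"
proof -
  have inner: "(\<Sum>p<Suc k. (-1)^p * efac \<tau> (x i) (y p) ^ k * (\<Prod>l\<in>{0..<Suc k}-{p}. y l) *
      det (vandermonde k (y \<circ> insert_index p))) = (1 + \<tau> * x i)^k * det (vandermonde (Suc k) y)" for i
    using vandermonde_first_row_laplace[OF degree_linear_power_le[of "1 + \<tau> * x i" "\<tau> * (1 + \<tau> * x i) - x i" k], of y]
    by (simp add: efac_def algebra_simps)
  have outer: "(\<Sum>i<Suc k. (-1)^i * (1 + \<tau> * x i)^k * (\<Prod>l\<in>{0..<Suc k}-{i}. x l) *
      det (vandermonde k (x \<circ> insert_index i))) = det (vandermonde (Suc k) x)"
    using vandermonde_first_row_laplace[OF degree_linear_power_le[of 1 \<tau> k], of x]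
    by (simp add: mult.commute)
  have "(\<Sum>i\<in>{0..<Suc k}. antisym_on {0..<Suc k} (defect_term \<tau> {0..<Suc k} i x) y) =
    (\<Sum>i<Suc k. (-1)^i * (1 + \<tau> * x i)^k * (\<Prod>l\<in>{0..<Suc k}-{i}. x l) *
      det (vandermonde k (x \<circ> insert_index i)) * det (vandermonde (Suc k) y))"
    unfolding atLeast0LessThan[symmetric, of "Suc k"]
  proof (rule sum.cong[OF refl])
    fix i assume "i \<in> {0..<Suc k}"
    then have "i < Suc k" by simp
    then show "antisym_on {0..<Suc k} (defect_term \<tau> {0..<Suc k} i x) y =
      (-1)^i * (1 + \<tau> * x i)^k * (\<Prod>l\<in>{0..<Suc k}-{i}. x l) *
      det (vandermonde k (x \<circ> insert_index i)) * det (vandermonde (Suc k) y)"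
      by (simp only: antisym_on_defect_term inner) (simp add: mult_ac)
  qed
  then show ?thesis
    by (simp only: outer[symmetric] sum_distrib_right)
qed

lemma antisym_on_cauchy_defect:
  fixes x y :: "nat \<Rightarrow> 'a::field_char_0"
  assumes fin: "finite S" and ne: "S \<noteq> {}"
  shows "antisym_on S (cauchy_defect \<tau> S x) y = 0"
proof -
  obtain h where h: "bij_betw h {0..<card S} S"
    using ex_bij_betw_nat_finite[OF fin] by blast
  obtain k where k: "card S = Suc k"
    using fin ne by (cases "card S") auto
  have "antisym_on S (cauchy_defect \<tau> S x) y =
      antisym_on {0..<Suc k} (cauchy_defect \<tau> {0..<Suc k} (x \<circ> h)) (y \<circ> h)"
  proof (rule antisym_on_bij_betw[OF h[unfolded k]])
    show "cauchy_defect \<tau> S x z = cauchy_defect \<tau> {0..<Suc k} (x \<circ> h) (z \<circ> h)" for z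
      using cauchy_defect_image[of h "{0..<Suc k}" \<tau> x z] h k by (simp add: bij_betw_def)
  qed (auto intro: cauchy_defect_cong)
  also have "\<dots> = 0"
    unfolding cauchy_defect_def antisym_on_diff antisym_on_sum
    using sum_antisym_on_defect_terms[of k \<tau> "x \<circ> h" "y \<circ> h"]
      antisym_on_off_diag_cfac[of "Suc k" \<tau> "x \<circ> h" "y \<circ> h"]
    by simp
  finally show ?thesis .
qed

section \<open>The recurrence of the kernel\<close>

definition dfac :: "'a::comm_ring_1 \<Rightarrow> 'a \<Rightarrow> 'a" where
  "dfac a b = 1 - a * b"

definition afac :: "'a::comm_ring_1 \<Rightarrow> 'a \<Rightarrow> 'a \<Rightarrow> 'a" where
  "afac \<tau> p q = p * q + \<tau> * q + 1"

lemma afac_mult_afac: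
  "afac \<tau> a b * afac \<tau> c d = cfac \<tau> b c * cfac \<tau> a d + dfac a c * efac \<tau> b d"
  unfolding afac_def cfac_def dfac_def efac_def by (simp add: algebra_simps)

definition cauchy_kernel :: "'a::field \<Rightarrow> nat set \<Rightarrow> (nat \<Rightarrow> 'a) \<Rightarrow> (nat \<Rightarrow> 'a) \<Rightarrow> 'a" where
  "cauchy_kernel \<tau> N x z = (\<Prod>j\<in>N. 1 / dfac (x j) (z j)) * (\<Prod>(j,k)\<in>off_diag N. cfac \<tau> (x j) (z k))"

definition pivot_factor :: "'a::comm_ring_1 \<Rightarrow> nat set \<Rightarrow> nat \<Rightarrow> (nat \<Rightarrow> 'a) \<Rightarrow> 'a" where
  "pivot_factor \<tau> N i x = (\<Prod>l\<in>N-{i}. x l * afac \<tau> (x l) (x i))"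

definition outer_weight :: "'a::field \<Rightarrow> nat set \<Rightarrow> nat set \<Rightarrow> (nat \<Rightarrow> 'a) \<Rightarrow> (nat \<Rightarrow> 'a) \<Rightarrow> 'a" where
  "outer_weight \<tau> N S x z = (\<Prod>j\<in>N-S. x j * z j / dfac (x j) (z j)) *
     (\<Prod>(j,k)\<in>off_diag N - off_diag S. cfac \<tau> (x j) (z k))"

text \<open>Expand each factor of the two pivot products by \<open>afac_mult_afac\<close> and sort the terms by the set
  \<open>B\<close> of indices where the \<open>dfac\<close>-summand is chosen.\<close>
lemma pivot_factor_mult_cauchy_kernel:
  fixes x z :: "nat \<Rightarrow> 'a::field"
  assumes fin: "finite N" and i: "i \<in> N" and dnz: "\<And>j. j \<in> N \<Longrightarrow> dfac (x j) (z j) \<noteq> 0"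
  shows "pivot_factor \<tau> N i x * pivot_factor \<tau> N i z * cauchy_kernel \<tau> (N-{i}) x z =
    (\<Sum>B\<in>Pow (N-{i}). outer_weight \<tau> N (insert i B) x z * defect_term \<tau> (insert i B) i x z)"
proof -
  let ?e = "efac \<tau> (x i) (z i)" and ?c = "\<lambda>(j,k). cfac \<tau> (x j) (z k)"
  define f1 where "f1 l = x l * z l * dfac (x l) (z l) * ?e" for l
  define f2 where "f2 l = x l * z l * (cfac \<tau> (x i) (z l) * cfac \<tau> (x l) (z i))" for l
  have "pivot_factor \<tau> N i x * pivot_factor \<tau> N i z = (\<Prod>l\<in>N-{i}. f1 l + f2 l)"
    unfolding pivot_factor_def prod.distrib[symmetric] f1_def f2_def
    by (intro prod.cong refl) (simp add: afac_mult_afac algebra_simps)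
  also have "\<dots> = (\<Sum>B\<in>Pow (N-{i}). (\<Prod>l\<in>B. f1 l) * (\<Prod>l\<in>N-{i}-B. f2 l))"
    by (rule prod_add) (use fin in simp)
  finally have expand: "pivot_factor \<tau> N i x * pivot_factor \<tau> N i z =
      (\<Sum>B\<in>Pow (N-{i}). (\<Prod>l\<in>B. f1 l) * (\<Prod>l\<in>N-{i}-B. f2 l))" .
  have "(\<Prod>l\<in>B. f1 l) * (\<Prod>l\<in>N-{i}-B. f2 l) * cauchy_kernel \<tau> (N-{i}) x z =
      outer_weight \<tau> N (insert i B) x z * defect_term \<tau> (insert i B) i x z"
    if B: "B \<subseteq> N - {i}" for B
  proof -
    let ?S = "insert i B"
    have finB: "finite B" and iB: "i \<notin> B"
      using B fin finite_subset by auto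
    have S_i: "?S - {i} = B" and NSB: "N - {i} - B = N - ?S"
      using iB by auto
    have "(\<Prod>j\<in>N-{i}. 1 / dfac (x j) (z j)) = (\<Prod>j\<in>B. 1 / dfac (x j) (z j)) * (\<Prod>j\<in>N-?S. 1 / dfac (x j) (z j))"
      using B finB fin by (subst prod.union_disjoint[symmetric]) (auto intro: prod.cong)
    moreover have "(\<Prod>l\<in>B. dfac (x l) (z l)) * (\<Prod>j\<in>B. 1 / dfac (x j) (z j)) = 1"
      unfolding prod.distrib[symmetric] using B dnz by (intro prod.neutral) auto
    moreover have "(\<Prod>l\<in>N-?S. ?c (i,l)) * (\<Prod>l\<in>N-?S. ?c (l,i)) * prod ?c (off_diag (N-{i}))
        = prod ?c (off_diag N - off_diag ?S) * prod ?c (off_diag B)"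
      using prod_off_diag_remove[of N ?S i ?c, OF fin] B i S_i by auto
    ultimately show ?thesis
      unfolding NSB cauchy_kernel_def outer_weight_def defect_term_def f1_def f2_def S_i
      using finB iB by (simp add: prod.distrib divide_inverse mult_ac)
  qed
  then show ?thesis
    unfolding expand sum_distrib_right by (intro sum.cong refl) simp
qed

lemma sum_pivot_factor_mult_cauchy_kernel:
  fixes x z :: "nat \<Rightarrow> 'a::field"
  assumes fin: "finite N" and dnz: "\<And>j. j \<in> N \<Longrightarrow> dfac (x j) (z j) \<noteq> 0"
  shows "(\<Sum>i\<in>N. pivot_factor \<tau> N i x * pivot_factor \<tau> N i z * cauchy_kernel \<tau> (N-{i}) x z) =
    (\<Sum>S\<in>Pow N. outer_weight \<tau> N S x z * (\<Sum>i\<in>S. defect_term \<tau> S i x z))"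
proof -
  let ?G = "\<lambda>i S. outer_weight \<tau> N S x z * defect_term \<tau> S i x z"
  have "(\<Sum>B\<in>Pow (N-{i}). ?G i (insert i B)) = (\<Sum>S\<in>{S. S \<in> Pow N \<and> i \<in> S}. ?G i S)" if "i \<in> N" for i
    by (rule sum.reindex_bij_witness[where i = "\<lambda>S. S - {i}" and j = "insert i"]) (use that in auto)
  then have "(\<Sum>i\<in>N. pivot_factor \<tau> N i x * pivot_factor \<tau> N i z * cauchy_kernel \<tau> (N-{i}) x z) =
      (\<Sum>i\<in>N. \<Sum>S\<in>{S. S \<in> Pow N \<and> i \<in> S}. ?G i S)"
    by (simp add: pivot_factor_mult_cauchy_kernel[OF fin _ dnz])
  also have "\<dots> = (\<Sum>S\<in>Pow N. \<Sum>i\<in>{i. i \<in> N \<and> i \<in> S}. ?G i S)"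
    by (rule sum.swap_restrict) (use fin in auto)
  also have "\<dots> = (\<Sum>S\<in>Pow N. outer_weight \<tau> N S x z * (\<Sum>i\<in>S. defect_term \<tau> S i x z))"
    by (intro sum.cong refl) (auto simp: sum_distrib_left intro: sum.cong)
  finally show ?thesis .
qed

lemma one_minus_prod_mult_cauchy_kernel:
  fixes x z :: "nat \<Rightarrow> 'a::field"
  assumes fin: "finite N" and dnz: "\<And>j. j \<in> N \<Longrightarrow> dfac (x j) (z j) \<noteq> 0"
  shows "(1 - (\<Prod>j\<in>N. x j * z j)) * cauchy_kernel \<tau> N x z =
    (\<Sum>S\<in>Pow N - {{}}. outer_weight \<tau> N S x z * (\<Prod>(j,k)\<in>off_diag S. cfac \<tau> (x j) (z k)))"
proof -
  let ?c = "\<lambda>(j,k). cfac \<tau> (x j) (z k)"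
  have "1 = (\<Prod>j\<in>N. dfac (x j) (z j) + x j * z j)"
    by (simp add: dfac_def)
  also have "\<dots> = (\<Sum>S\<in>Pow N. (\<Prod>j\<in>S. dfac (x j) (z j)) * (\<Prod>j\<in>N-S. x j * z j))"
    by (rule prod_add[OF fin])
  also have "\<dots> = (\<Prod>j\<in>N. x j * z j) + (\<Sum>S\<in>Pow N - {{}}. (\<Prod>j\<in>S. dfac (x j) (z j)) * (\<Prod>j\<in>N-S. x j * z j))"
    by (subst sum.remove[of _ "{}"]) (use fin in auto)
  finally have one: "1 - (\<Prod>j\<in>N. x j * z j) =
      (\<Sum>S\<in>Pow N - {{}}. (\<Prod>j\<in>S. dfac (x j) (z j)) * (\<Prod>j\<in>N-S. x j * z j))"
    by (simp add: algebra_simps)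
  have "(\<Prod>j\<in>S. dfac (x j) (z j)) * (\<Prod>j\<in>N-S. x j * z j) * cauchy_kernel \<tau> N x z =
      outer_weight \<tau> N S x z * prod ?c (off_diag S)" if S: "S \<subseteq> N" for S
  proof -
    have "(\<Prod>j\<in>N. 1 / dfac (x j) (z j)) = (\<Prod>j\<in>N-S. 1 / dfac (x j) (z j)) * (\<Prod>j\<in>S. 1 / dfac (x j) (z j))"
      by (rule prod.subset_diff[OF S fin])
    moreover have "prod ?c (off_diag N) = prod ?c (off_diag N - off_diag S) * prod ?c (off_diag S)"
      by (rule prod.subset_diff) (use S fin in \<open>auto intro!: off_diag_mono\<close>)
    moreover have "(\<Prod>j\<in>S. dfac (x j) (z j)) * (\<Prod>j\<in>S. 1 / dfac (x j) (z j)) = 1"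
      unfolding prod.distrib[symmetric] using S dnz by (intro prod.neutral) auto
    ultimately show ?thesis
      unfolding cauchy_kernel_def outer_weight_def by (simp add: prod.distrib divide_inverse mult_ac)
  qed
  then show ?thesis
    unfolding one sum_distrib_right by (intro sum.cong refl) simp
qed

lemma pivot_recurrence_cauchy_kernel:
  fixes x z :: "nat \<Rightarrow> 'a::field"
  assumes fin: "finite N" and dnz: "\<And>j. j \<in> N \<Longrightarrow> dfac (x j) (z j) \<noteq> 0"
  shows "(\<Sum>i\<in>N. pivot_factor \<tau> N i x * pivot_factor \<tau> N i z * cauchy_kernel \<tau> (N-{i}) x z)
      - (1 - (\<Prod>j\<in>N. x j * z j)) * cauchy_kernel \<tau> N x z
    = (\<Sum>S\<in>Pow N - {{}}. outer_weight \<tau> N S x z * cauchy_defect \<tau> S x z)"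
proof -
  have "(\<Sum>S\<in>Pow N. outer_weight \<tau> N S x z * (\<Sum>i\<in>S. defect_term \<tau> S i x z)) =
      (\<Sum>S\<in>Pow N - {{}}. outer_weight \<tau> N S x z * (\<Sum>i\<in>S. defect_term \<tau> S i x z))"
    by (subst sum.remove[of _ "{}"]) (use fin in auto)
  then have "(\<Sum>i\<in>N. pivot_factor \<tau> N i x * pivot_factor \<tau> N i z * cauchy_kernel \<tau> (N-{i}) x z) =
      (\<Sum>S\<in>Pow N - {{}}. outer_weight \<tau> N S x z * (\<Sum>i\<in>S. defect_term \<tau> S i x z))"
    using sum_pivot_factor_mult_cauchy_kernel[OF fin dnz] by simp
  with one_minus_prod_mult_cauchy_kernel[OF fin dnz] show ?thesis
    by (simp add: cauchy_defect_def right_diff_distrib sum_subtractf)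
qed

lemma outer_weight_permute:
  assumes SN: "S \<subseteq> N" and p: "p permutes S"
  shows "outer_weight \<tau> N S x (z \<circ> p) = outer_weight \<tau> N S x z"
proof -
  define A where "A = off_diag N - off_diag S"
  have mem: "(j, p k) \<in> A \<longleftrightarrow> (j, k) \<in> A" for j k
    using SN permutes_in_image[OF p, of k] permutes_not_in[OF p, of k]
    by (cases "k \<in> S") (auto simp: A_def off_diag_def)
  have mem_inv: "(j, inv_into UNIV p k) \<in> A \<longleftrightarrow> (j, k) \<in> A" for j k
    using mem[of j "inv_into UNIV p k"] by (simp add: permutes_inverses[OF p])
  have "bij_betw (\<lambda>(j,k). (j, p k)) A A"
    by (rule bij_betw_byWitness[where f' = "\<lambda>(j,k). (j, inv_into UNIV p k)"])
      (auto simp: mem mem_inv permutes_inverses[OF p])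
  then have "(\<Prod>(j,k)\<in>A. cfac \<tau> (x j) (z (p k))) = (\<Prod>(j,k)\<in>A. cfac \<tau> (x j) (z k))"
    using prod.reindex_bij_betw[of "\<lambda>(j,k). (j, p k)" A A "\<lambda>(j,k). cfac \<tau> (x j) (z k)"]
    by (simp add: case_prod_beta)
  moreover have "(\<Prod>j\<in>N-S. x j * z (p j) / dfac (x j) (z (p j))) = (\<Prod>j\<in>N-S. x j * z j / dfac (x j) (z j))"
    by (intro prod.cong) (simp_all add: permutes_not_in[OF p])
  ultimately show ?thesis
    by (simp add: outer_weight_def A_def)
qed

lemma antisym_on_pivot_recurrence_cauchy_kernel:
  fixes x y :: "nat \<Rightarrow> 'a::field_char_0"
  assumes fin: "finite N" and dnz: "\<And>j k. j \<in> N \<Longrightarrow> k \<in> N \<Longrightarrow> dfac (x j) (y k) \<noteq> 0"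
  shows "antisym_on N (\<lambda>z. (\<Sum>i\<in>N. pivot_factor \<tau> N i x * pivot_factor \<tau> N i z * cauchy_kernel \<tau> (N-{i}) x z)
      - (1 - (\<Prod>j\<in>N. x j * z j)) * cauchy_kernel \<tau> N x z) y = 0"
proof -
  have "antisym_on N (\<lambda>z. (\<Sum>i\<in>N. pivot_factor \<tau> N i x * pivot_factor \<tau> N i z * cauchy_kernel \<tau> (N-{i}) x z)
      - (1 - (\<Prod>j\<in>N. x j * z j)) * cauchy_kernel \<tau> N x z) y
    = antisym_on N (\<lambda>z. \<Sum>S\<in>Pow N - {{}}. outer_weight \<tau> N S x z * cauchy_defect \<tau> S x z) y"
    using dnz permutes_in_image
    by (intro antisym_on_cong pivot_recurrence_cauchy_kernel[OF fin]) fastforce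
  also have "\<dots> = (\<Sum>S\<in>Pow N - {{}}. antisym_on N (\<lambda>z. outer_weight \<tau> N S x z * cauchy_defect \<tau> S x z) y)"
    by (rule antisym_on_sum)
  also have "\<dots> = 0"
  proof (intro sum.neutral ballI)
    fix S assume "S \<in> Pow N - {{}}"
    then have SN: "S \<subseteq> N" and "S \<noteq> {}" and "finite S"
      using fin finite_subset by auto
    then show "antisym_on N (\<lambda>z. outer_weight \<tau> N S x z * cauchy_defect \<tau> S x z) y = 0"
      by (intro antisym_on_mult_vanishing[OF fin SN] outer_weight_permute antisym_on_cauchy_defect)
  qed
  finally show ?thesis .
qed

section \<open>Both sides satisfy the same recursion\<close>

definition swap_last :: "nat \<Rightarrow> nat \<Rightarrow> nat \<Rightarrow> nat" where
  "swap_last m b = Transposition.transpose (Suc m) b"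

definition swap_sign :: "nat \<Rightarrow> nat \<Rightarrow> complex" where
  "swap_sign m b = (if b = Suc m then 1 else -1)"

lemma swap_last_permutes: "b \<in> {1..Suc m} \<Longrightarrow> swap_last m b permutes {1..Suc m}"
  unfolding swap_last_def by (rule permutes_swap_id) auto

lemma sign_swap_last: "of_int (sign (swap_last m b)) = swap_sign m b"
  unfolding swap_last_def swap_sign_def by (simp add: sign_swap_id)

lemma bij_betw_swap_last:
  assumes "b \<in> {1..Suc m}"
  shows "bij_betw (swap_last m b) {1..m} ({1..Suc m} - {b})"
proof -
  have "{1..Suc m} - {Suc m} = {1..m}" by auto
  then show ?thesis
    using bij_betw_permutes_remove[OF swap_last_permutes[OF assms], of "Suc m"]
    by (simp add: swap_last_def)
qed

lemma pivot_factor_swap_last: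
  assumes "b \<in> {1..Suc m}"
  shows "pivot_factor \<tau> {1..Suc m} (Suc m) (x \<circ> swap_last m b) = pivot_factor \<tau> {1..Suc m} b x"
proof -
  have "{1..Suc m} - {Suc m} = {1..m}" by auto
  then show ?thesis
    unfolding pivot_factor_def
    using prod.reindex_bij_betw[OF bij_betw_swap_last[OF assms], of "\<lambda>l. x l * afac \<tau> (x l) (x b)"]
    by (simp add: swap_last_def)
qed

lemma pivot_factor_last_permute:
  assumes "p permutes {1..m}"
  shows "pivot_factor \<tau> {1..Suc m} (Suc m) (x \<circ> p) = pivot_factor \<tau> {1..Suc m} (Suc m) x"
proof -
  have "{1..Suc m} - {Suc m} = {1..m}" and "p (Suc m) = Suc m"
    using permutes_not_in[OF assms] by auto
  then show ?thesis
    unfolding pivot_factor_def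
    using prod.permute[OF assms, of "\<lambda>l. x l * afac \<tau> (x l) (x (Suc m))"] by (simp add: comp_def)
qed

lemma cauchy_kernel_swap_last:
  assumes b: "b \<in> {1..Suc m}"
  shows "cauchy_kernel \<tau> {1..m} (x \<circ> swap_last m b) (z \<circ> swap_last m b) = cauchy_kernel \<tau> ({1..Suc m} - {b}) x z"
  unfolding cauchy_kernel_def
  using prod.reindex_bij_betw[OF bij_betw_swap_last[OF b], of "\<lambda>j. 1 / dfac (x j) (z j)"]
    prod.reindex_bij_betw[OF bij_betw_off_diag[OF bij_betw_swap_last[OF b]], of "\<lambda>(j,k). cfac \<tau> (x j) (z k)"]
  by (simp add: case_prod_beta)

lemma prod_mult_permutes:
  assumes "finite N" "p permutes N" "q permutes N"
  shows "(\<Prod>l\<in>N. x (p l) * y (q l)) = (\<Prod>l\<in>N. x l * y l)"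
  using prod.permute[OF assms(2), of x] prod.permute[OF assms(3), of y]
  by (simp add: prod.distrib comp_def)

lemma antisym_on_pivot_factor_last:
  "antisym_on {1..Suc m} (\<lambda>w. pivot_factor \<tau> {1..Suc m} (Suc m) w * F w) v =
    (\<Sum>b\<in>{1..Suc m}. swap_sign m b * pivot_factor \<tau> {1..Suc m} b v * antisym_on {1..m} F (v \<circ> swap_last m b))"
proof -
  have N: "insert (Suc m) {1..m} = {1..Suc m}"
    by auto
  have "antisym_on (insert (Suc m) {1..m}) (\<lambda>w. pivot_factor \<tau> {1..Suc m} (Suc m) w * F w) v =
      (\<Sum>b\<in>insert (Suc m) {1..m}. (if b = Suc m then 1 else -1) *
        pivot_factor \<tau> {1..Suc m} (Suc m) (v \<circ> Transposition.transpose (Suc m) b) *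
        antisym_on {1..m} F (v \<circ> Transposition.transpose (Suc m) b))"
    by (rule antisym_on_insert_invariant_factor) (simp, simp, erule pivot_factor_last_permute)
  also have "\<dots> = (\<Sum>b\<in>{1..Suc m}. swap_sign m b * pivot_factor \<tau> {1..Suc m} b v * antisym_on {1..m} F (v \<circ> swap_last m b))"
    unfolding N
  proof (rule sum.cong[OF refl])
    fix b assume "b \<in> {1..Suc m}"
    then show "(if b = Suc m then 1 else -1) * pivot_factor \<tau> {1..Suc m} (Suc m) (v \<circ> Transposition.transpose (Suc m) b) *
        antisym_on {1..m} F (v \<circ> Transposition.transpose (Suc m) b) =
      swap_sign m b * pivot_factor \<tau> {1..Suc m} b v * antisym_on {1..m} F (v \<circ> swap_last m b)"
      by (simp only: swap_sign_def swap_last_def[symmetric] pivot_factor_swap_last)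
  qed
  finally show ?thesis
    unfolding N .
qed

definition pivot_sum :: "nat \<Rightarrow> complex \<Rightarrow> ((nat \<Rightarrow> complex) \<Rightarrow> (nat \<Rightarrow> complex) \<Rightarrow> complex) \<Rightarrow>
    (nat \<Rightarrow> complex) \<Rightarrow> (nat \<Rightarrow> complex) \<Rightarrow> complex" where
  "pivot_sum m \<tau> F x y = (\<Sum>b\<in>{1..Suc m}. \<Sum>c\<in>{1..Suc m}. swap_sign m b * swap_sign m c *
     pivot_factor \<tau> {1..Suc m} b x * pivot_factor \<tau> {1..Suc m} c y * F (x \<circ> swap_last m b) (y \<circ> swap_last m c))"

definition lhs :: "nat \<Rightarrow> complex \<Rightarrow> (nat \<Rightarrow> complex) \<Rightarrow> (nat \<Rightarrow> complex) \<Rightarrow> complex" where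
  "lhs n \<tau> x y = antisym_on {1..n} (\<lambda>x'. antisym_on {1..n} (\<lambda>y'. lhs_summand n \<tau> x' y') y) x"

definition rhs :: "nat \<Rightarrow> complex \<Rightarrow> (nat \<Rightarrow> complex) \<Rightarrow> (nat \<Rightarrow> complex) \<Rightarrow> complex" where
  "rhs n \<tau> x y = antisym_on {1..n} (cauchy_kernel \<tau> {1..n} x) y"

lemma lhs_summand_Suc:
  "lhs_summand (Suc m) \<tau> x y =
     pivot_factor \<tau> {1..Suc m} (Suc m) x * pivot_factor \<tau> {1..Suc m} (Suc m) y /
     (1 - (\<Prod>l\<in>{1..Suc m}. x l * y l)) * lhs_summand m \<tau> x y"
proof -
  define D where "D j = 1 - (\<Prod>l=1..j. x l * y l)" for j
  define f where "f j k = (x j * x k + \<tau> * x k + 1) * (y j * y k + \<tau> * y k + 1)" for j k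
  have N: "{1..Suc m} = insert (Suc m) {1..m}" and M: "{1..Suc m} - {Suc m} = {1..m}"
    by auto
  have "(\<Prod>j=1..m. (x j * y j) ^ (Suc m - j) / D j) =
      (\<Prod>j=1..m. x j * y j) * (\<Prod>j=1..m. (x j * y j) ^ (m - j) / D j)"
    unfolding prod.distrib[symmetric] by (intro prod.cong refl) (simp add: Suc_diff_le)
  moreover have "(\<Prod>j=1..Suc m. (x j * y j) ^ (Suc m - j) / D j) =
      1 / D (Suc m) * (\<Prod>j=1..m. (x j * y j) ^ (Suc m - j) / D j)"
    unfolding N by simp
  ultimately have A: "(\<Prod>j=1..Suc m. (x j * y j) ^ (Suc m - j) / D j) =
      1 / D (Suc m) * ((\<Prod>j=1..m. x j * y j) * (\<Prod>j=1..m. (x j * y j) ^ (m - j) / D j))"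
    by simp
  have "(\<Prod>k\<in>{j<..Suc m}. f j k) = f j (Suc m) * (\<Prod>k\<in>{j<..m}. f j k)" if "j \<in> {1..m}" for j
  proof -
    have "{j<..Suc m} = insert (Suc m) {j<..m}"
      using that by auto
    then show ?thesis by simp
  qed
  then have "(\<Prod>j\<in>{1..m}. \<Prod>k\<in>{j<..Suc m}. f j k) = (\<Prod>j\<in>{1..m}. f j (Suc m) * (\<Prod>k\<in>{j<..m}. f j k))"
    by (rule prod.cong[OF refl])
  then have B: "(\<Prod>j\<in>{1..Suc m}. \<Prod>k\<in>{j<..Suc m}. f j k) =
      (\<Prod>j\<in>{1..m}. f j (Suc m)) * (\<Prod>j\<in>{1..m}. \<Prod>k\<in>{j<..m}. f j k)"
    unfolding N by (simp add: prod.distrib)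
  have "lhs_summand (Suc m) \<tau> x y = (\<Prod>j=1..m. x j * y j) * (\<Prod>j\<in>{1..m}. f j (Suc m)) / D (Suc m) *
      lhs_summand m \<tau> x y"
    unfolding lhs_summand_def D_def[symmetric] f_def[symmetric] A B by (simp add: mult_ac)
  also have "(\<Prod>j=1..m. x j * y j) * (\<Prod>j\<in>{1..m}. f j (Suc m)) =
      pivot_factor \<tau> {1..Suc m} (Suc m) x * pivot_factor \<tau> {1..Suc m} (Suc m) y"
    unfolding pivot_factor_def M f_def afac_def prod.distrib[symmetric] by (intro prod.cong refl) (simp add: mult_ac)
  finally show ?thesis
    by (simp add: D_def)
qed

lemma lhs_Suc:
  "lhs (Suc m) \<tau> x y = pivot_sum m \<tau> (lhs m \<tau>) x y / (1 - (\<Prod>l\<in>{1..Suc m}. x l * y l))"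
proof -
  let ?N = "{1..Suc m}" and ?M = "{1..m}"
  define piv where "piv w = pivot_factor \<tau> ?N (Suc m) w" for w
  define P where "P v w = 1 / (1 - (\<Prod>l\<in>?N. v l * w l))" for v w :: "nat \<Rightarrow> complex"
  have P_permute: "P (v \<circ> p) (w \<circ> q) = P v w" if "p permutes ?N" "q permutes ?N" for v w p q
    unfolding P_def using prod_mult_permutes[OF _ that, of v w] by simp
  have inner: "antisym_on ?N (\<lambda>y'. lhs_summand (Suc m) \<tau> x' y') y = P x' y * (piv x' *
      (\<Sum>c\<in>?N. swap_sign m c * pivot_factor \<tau> ?N c y * antisym_on ?M (lhs_summand m \<tau> x') (y \<circ> swap_last m c)))"
    for x'
  proof -
    have "antisym_on ?N (\<lambda>y'. lhs_summand (Suc m) \<tau> x' y') y =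
        antisym_on ?N (\<lambda>y'. P x' y' * (piv x' * (piv y' * lhs_summand m \<tau> x' y'))) y"
      unfolding lhs_summand_Suc piv_def P_def by (simp add: mult_ac)
    also have "\<dots> = P x' y * (piv x' * antisym_on ?N (\<lambda>y'. piv y' * lhs_summand m \<tau> x' y') y)"
      using P_permute[OF permutes_id] by (simp add: antisym_on_mult_invariant antisym_on_cmult)
    finally show ?thesis
      unfolding piv_def antisym_on_pivot_factor_last .
  qed
  have "lhs (Suc m) \<tau> x y = P x y * antisym_on ?N (\<lambda>x'. piv x' * (\<Sum>c\<in>?N. swap_sign m c * pivot_factor \<tau> ?N c y *
      antisym_on ?M (lhs_summand m \<tau> x') (y \<circ> swap_last m c))) x"
    unfolding lhs_def inner
    by (rule antisym_on_mult_invariant) (use P_permute[OF _ permutes_id] in simp)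
  also have "\<dots> = P x y * pivot_sum m \<tau> (lhs m \<tau>) x y"
    unfolding piv_def antisym_on_pivot_factor_last pivot_sum_def
    by (simp add: antisym_on_sum antisym_on_cmult lhs_def sum_distrib_left mult_ac del: sum.cl_ivl_Suc)
  finally show ?thesis
    by (simp add: P_def)
qed

lemma rhs_Suc:
  assumes dnz: "\<And>j k. j \<in> {1..Suc m} \<Longrightarrow> k \<in> {1..Suc m} \<Longrightarrow> dfac (x j) (y k) \<noteq> 0"
  shows "(1 - (\<Prod>l\<in>{1..Suc m}. x l * y l)) * rhs (Suc m) \<tau> x y = pivot_sum m \<tau> (rhs m \<tau>) x y"
proof -
  let ?N = "{1..Suc m}" and ?M = "{1..m}"
  have finN: "finite ?N"
    by simp
  have "antisym_on ?N (\<lambda>z. (1 - (\<Prod>j\<in>?N. x j * z j)) * cauchy_kernel \<tau> ?N x z) y =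
      (1 - (\<Prod>l\<in>?N. x l * y l)) * rhs (Suc m) \<tau> x y"
    unfolding rhs_def
  proof (rule antisym_on_mult_invariant)
    fix \<pi> assume "\<pi> permutes ?N"
    then show "1 - (\<Prod>j\<in>?N. x j * (y \<circ> \<pi>) j) = 1 - (\<Prod>j\<in>?N. x j * y j)"
      using prod_mult_permutes[OF finN permutes_id, of \<pi> x y] by (simp only: comp_apply id_apply)
  qed
  then have "(1 - (\<Prod>l\<in>?N. x l * y l)) * rhs (Suc m) \<tau> x y = antisym_on ?N (\<lambda>z.
      \<Sum>b\<in>?N. pivot_factor \<tau> ?N b x * (pivot_factor \<tau> ?N b z * cauchy_kernel \<tau> (?N-{b}) x z)) y"
    using antisym_on_pivot_recurrence_cauchy_kernel[OF finN dnz, where \<tau> = \<tau>]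
    by (simp add: antisym_on_diff mult.assoc)
  also have "\<dots> = (\<Sum>b\<in>?N. pivot_factor \<tau> ?N b x *
      antisym_on ?N (\<lambda>z. pivot_factor \<tau> ?N b z * cauchy_kernel \<tau> (?N-{b}) x z) y)"
    by (simp only: antisym_on_sum antisym_on_cmult)
  also have "\<dots> = pivot_sum m \<tau> (rhs m \<tau>) x y"
    unfolding pivot_sum_def
  proof (rule sum.cong[OF refl])
    fix b assume b: "b \<in> ?N"
    define H where "H w = pivot_factor \<tau> ?N (Suc m) w * cauchy_kernel \<tau> ?M (x \<circ> swap_last m b) w" for w
    have "pivot_factor \<tau> ?N b z * cauchy_kernel \<tau> (?N-{b}) x z = H (z \<circ> swap_last m b)" for z
      using pivot_factor_swap_last[OF b, of \<tau> z] cauchy_kernel_swap_last[OF b, of \<tau> x z]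
      by (simp add: H_def)
    then have "antisym_on ?N (\<lambda>z. pivot_factor \<tau> ?N b z * cauchy_kernel \<tau> (?N-{b}) x z) y =
        swap_sign m b * antisym_on ?N H y"
      using antisym_on_precompose[OF finN swap_last_permutes[OF b], of H y] by (simp add: sign_swap_last)
    also have "antisym_on ?N H y =
        (\<Sum>c\<in>?N. swap_sign m c * pivot_factor \<tau> ?N c y * rhs m \<tau> (x \<circ> swap_last m b) (y \<circ> swap_last m c))"
      unfolding H_def antisym_on_pivot_factor_last rhs_def ..
    finally show "pivot_factor \<tau> ?N b x * antisym_on ?N (\<lambda>z. pivot_factor \<tau> ?N b z * cauchy_kernel \<tau> (?N-{b}) x z) y =
        (\<Sum>c\<in>?N. swap_sign m b * swap_sign m c * pivot_factor \<tau> ?N b x * pivot_factor \<tau> ?N c y *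
          rhs m \<tau> (x \<circ> swap_last m b) (y \<circ> swap_last m c))"
      by (simp add: sum_distrib_left mult_ac del: sum.cl_ivl_Suc)
  qed
  finally show ?thesis .
qed

definition admissible :: "nat \<Rightarrow> (nat \<Rightarrow> complex) \<Rightarrow> (nat \<Rightarrow> complex) \<Rightarrow> bool" where
  "admissible n x y \<longleftrightarrow>
     (\<forall>\<sigma> \<pi> j. \<sigma> permutes {1..n} \<longrightarrow> \<pi> permutes {1..n} \<longrightarrow> j \<in> {1..n} \<longrightarrow>
        1 - (\<Prod>l=1..j. x (\<sigma> l) * y (\<pi> l)) \<noteq> 0) \<and>
     (\<forall>j\<in>{1..n}. \<forall>k\<in>{1..n}. dfac (x j) (y k) \<noteq> 0)"

lemma admissible_swap_last:
  assumes adm: "admissible (Suc m) x y" and b: "b \<in> {1..Suc m}" and c: "c \<in> {1..Suc m}"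
  shows "admissible m (x \<circ> swap_last m b) (y \<circ> swap_last m c)"
  unfolding admissible_def
proof (intro conjI allI impI ballI)
  fix \<sigma> \<pi> j assume \<sigma>: "\<sigma> permutes {1..m}" and \<pi>: "\<pi> permutes {1..m}" and j: "j \<in> {1..m}"
  have "swap_last m b \<circ> \<sigma> permutes {1..Suc m}"
    by (rule permutes_compose[OF permutes_subset[OF \<sigma>] swap_last_permutes[OF b]]) auto
  moreover have "swap_last m c \<circ> \<pi> permutes {1..Suc m}"
    by (rule permutes_compose[OF permutes_subset[OF \<pi>] swap_last_permutes[OF c]]) auto
  ultimately show "1 - (\<Prod>l=1..j. (x \<circ> swap_last m b) (\<sigma> l) * (y \<circ> swap_last m c) (\<pi> l)) \<noteq> 0"
    using adm j unfolding admissible_def by force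
next
  fix j k assume "j \<in> {1..m}" "k \<in> {1..m}"
  then have "swap_last m b j \<in> {1..Suc m}" "swap_last m c k \<in> {1..Suc m}"
    using permutes_in_image[OF swap_last_permutes[OF b], of j] permutes_in_image[OF swap_last_permutes[OF c], of k]
    by auto
  then show "dfac ((x \<circ> swap_last m b) j) ((y \<circ> swap_last m c) k) \<noteq> 0"
    using adm unfolding admissible_def by simp
qed

lemma lhs_eq_rhs: "admissible n x y \<Longrightarrow> lhs n \<tau> x y = rhs n \<tau> x y"
proof (induction n arbitrary: x y)
  case 0
  then show ?case
    by (simp add: lhs_def rhs_def lhs_summand_def cauchy_kernel_def off_diag_def)
next
  case (Suc m)
  let ?P = "\<Prod>l\<in>{1..Suc m}. x l * y l"
  have "1 - (\<Prod>l=1..Suc m. x (id l) * y (id l)) \<noteq> 0"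
    using Suc.prems unfolding admissible_def by (metis atLeastAtMost_iff le_add1 order_refl plus_1_eq_Suc permutes_id)
  then have P: "1 - ?P \<noteq> 0"
    by simp
  have IH: "lhs m \<tau> (x \<circ> swap_last m b) (y \<circ> swap_last m c) = rhs m \<tau> (x \<circ> swap_last m b) (y \<circ> swap_last m c)"
    if "b \<in> {1..Suc m}" "c \<in> {1..Suc m}" for b c
    using Suc.IH admissible_swap_last[OF Suc.prems that] by blast
  have "pivot_sum m \<tau> (lhs m \<tau>) x y = pivot_sum m \<tau> (rhs m \<tau>) x y"
    unfolding pivot_sum_def by (intro sum.cong refl) (simp only: IH)
  also have "\<dots> = (1 - ?P) * rhs (Suc m) \<tau> x y"
    using Suc.prems by (intro rhs_Suc[symmetric]) (auto simp: admissible_def)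
  finally show ?case
    using P by (simp add: lhs_Suc)
qed

lemma det_psi_mat:
  "det (mat s s (\<lambda>(j, k). psi \<tau> (x (j + 1)) (y (k + 1)))) =
    antisym_on {1..s} (\<lambda>z. \<Prod>j\<in>{1..s}. psi \<tau> (x j) (z j)) y"
proof -
  let ?M = "mat s s (\<lambda>(j, k). psi \<tau> (x (j + 1)) (y (k + 1)))"
  have bij_Suc: "bij_betw Suc {0..<s} {1..s}"
    by (rule bij_betw_imageI) (auto simp: image_Suc_atLeastLessThan)
  have "det ?M = (\<Sum>p | p permutes {0..<s}. signof p * (\<Prod>i = 0..<s. ?M $$ (i, p i)))"
    by (rule det_def') simp
  also have "\<dots> = antisym_on {0..<s} (\<lambda>w. \<Prod>i<s. psi \<tau> (x (Suc i)) (w i)) (y \<circ> Suc)"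
    unfolding antisym_on_def
  proof (rule sum.cong[OF refl])
    fix p assume "p \<in> {p. p permutes {0..<s}}"
    then have "p i < s" if "i < s" for i
      using permutes_in_image[of p "{0..<s}" i] that by simp
    then show "signof p * (\<Prod>i = 0..<s. ?M $$ (i, p i)) =
        of_int (sign p) * (\<Prod>i<s. psi \<tau> (x (Suc i)) ((y \<circ> Suc \<circ> p) i))"
      by (simp add: atLeast0LessThan)
  qed
  also have "\<dots> = antisym_on {1..s} (\<lambda>z. \<Prod>j\<in>{1..s}. psi \<tau> (x j) (z j)) y"
  proof (rule antisym_on_bij_betw[OF bij_Suc, symmetric])
    show "(\<Prod>j\<in>{1..s}. psi \<tau> (x j) (z j)) = (\<Prod>i<s. psi \<tau> (x (Suc i)) ((z \<circ> Suc) i))" for z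
      using prod.reindex_bij_betw[OF bij_Suc, of "\<lambda>j. psi \<tau> (x j) (z j)"] by (simp add: atLeast0LessThan)
    show "(\<Prod>i<s. psi \<tau> (x (Suc i)) (z i)) = (\<Prod>i<s. psi \<tau> (x (Suc i)) (z' i))"
      if "\<And>i. i \<in> {0..<s} \<Longrightarrow> z i = z' i" for z z'
      using that by (intro prod.cong) auto
  qed simp
  finally show ?thesis .
qed

lemma prod_cfac_mult_prod_psi:
  assumes fin: "finite N" and nz: "\<And>j. j \<in> N \<Longrightarrow> cfac \<tau> (x j) (z j) \<noteq> 0"
  shows "(\<Prod>j\<in>N. \<Prod>k\<in>N. cfac \<tau> (x j) (z k)) * (\<Prod>j\<in>N. psi \<tau> (x j) (z j)) = cauchy_kernel \<tau> N x z"
proof -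
  have "(\<Prod>k\<in>N. cfac \<tau> (x j) (z k)) * psi \<tau> (x j) (z j) =
      1 / dfac (x j) (z j) * (\<Prod>k\<in>N-{j}. cfac \<tau> (x j) (z k))" if j: "j \<in> N" for j
  proof -
    have "(\<Prod>k\<in>N. cfac \<tau> (x j) (z k)) = cfac \<tau> (x j) (z j) * (\<Prod>k\<in>N-{j}. cfac \<tau> (x j) (z k))"
      by (rule prod.remove[OF fin j])
    moreover have "psi \<tau> (x j) (z j) = 1 / (dfac (x j) (z j) * cfac \<tau> (x j) (z j))"
      unfolding psi_def dfac_def cfac_def ..
    ultimately show ?thesis
      using nz[OF j] by (simp add: field_simps)
  qed
  then have "(\<Prod>j\<in>N. \<Prod>k\<in>N. cfac \<tau> (x j) (z k)) * (\<Prod>j\<in>N. psi \<tau> (x j) (z j)) =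
      (\<Prod>j\<in>N. 1 / dfac (x j) (z j) * (\<Prod>k\<in>N-{j}. cfac \<tau> (x j) (z k)))"
    unfolding prod.distrib[symmetric] by (rule prod.cong[OF refl])
  also have "\<dots> = cauchy_kernel \<tau> N x z"
    unfolding cauchy_kernel_def prod.distrib prod_off_diag[OF fin] ..
  finally show ?thesis .
qed

lemma rhs_eq_det:
  assumes nz: "\<And>j k. j \<in> {1..s} \<Longrightarrow> k \<in> {1..s} \<Longrightarrow> x j + y k + \<tau> * x j * y k \<noteq> 0"
  shows "rhs s \<tau> x y = (\<Prod>j=1..s. \<Prod>k=1..s. x j + y k + \<tau> * x j * y k) *
         det (mat s s (\<lambda>(j, k). psi \<tau> (x (j + 1)) (y (k + 1))))"
proof -
  let ?N = "{1..s}"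
  define g where "g z = (\<Prod>j\<in>?N. \<Prod>k\<in>?N. cfac \<tau> (x j) (z k))" for z
  have "g y * antisym_on ?N (\<lambda>z. \<Prod>j\<in>?N. psi \<tau> (x j) (z j)) y =
      antisym_on ?N (\<lambda>z. g z * (\<Prod>j\<in>?N. psi \<tau> (x j) (z j))) y"
  proof (rule antisym_on_mult_invariant[symmetric])
    fix p assume p: "p permutes ?N"
    show "g (y \<circ> p) = g y"
      unfolding g_def
    proof (rule prod.cong[OF refl])
      fix j
      show "(\<Prod>k\<in>?N. cfac \<tau> (x j) ((y \<circ> p) k)) = (\<Prod>k\<in>?N. cfac \<tau> (x j) (y k))"
        using prod.permute[OF p, of "\<lambda>k. cfac \<tau> (x j) (y k)"] by (simp add: comp_def)
    qed
  qed
  also have "\<dots> = rhs s \<tau> x y"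
    unfolding rhs_def g_def
  proof (rule antisym_on_cong)
    fix p assume p: "p permutes ?N"
    have "cfac \<tau> (x j) ((y \<circ> p) j) \<noteq> 0" if "j \<in> ?N" for j
      using nz[OF that permutes_in_image[OF p, THEN iffD2, OF that]] by (simp add: cfac_def)
    then show "(\<Prod>j\<in>?N. \<Prod>k\<in>?N. cfac \<tau> (x j) ((y \<circ> p) k)) * (\<Prod>j\<in>?N. psi \<tau> (x j) ((y \<circ> p) j)) =
        cauchy_kernel \<tau> ?N x (y \<circ> p)"
      by (intro prod_cfac_mult_prod_psi) simp_all
  qed
  finally show ?thesis
    unfolding det_psi_mat g_def cfac_def by simp
qed

theorem proposition4p2:
  fixes s :: nat and \<tau> :: complex and x y :: "nat \<Rightarrow> complex"
  assumes "s \<ge> 1"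
    and "\<And>\<sigma> \<pi> j. \<sigma> permutes {1..s} \<Longrightarrow> \<pi> permutes {1..s} \<Longrightarrow> j \<in> {1..s} \<Longrightarrow>
           1 - (\<Prod>l=1..j. x (\<sigma> l) * y (\<pi> l)) \<noteq> 0"
    and "\<And>j k. j \<in> {1..s} \<Longrightarrow> k \<in> {1..s} \<Longrightarrow> 1 - x j * y k \<noteq> 0"
    and "\<And>j k. j \<in> {1..s} \<Longrightarrow> k \<in> {1..s} \<Longrightarrow> x j + y k + \<tau> * x j * y k \<noteq> 0"
  shows "antisym s (\<lambda>x'. antisym s (\<lambda>y'. lhs_summand s \<tau> x' y') y) x =
         (\<Prod>j=1..s. \<Prod>k=1..s. x j + y k + \<tau> * x j * y k) *
         det (mat s s (\<lambda>(j, k). psi \<tau> (x (j + 1)) (y (k + 1))))"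
proof -
  have "admissible s x y"
    unfolding admissible_def dfac_def using assms(2,3) by blast
  have "antisym s (\<lambda>x'. antisym s (\<lambda>y'. lhs_summand s \<tau> x' y') y) x = lhs s \<tau> x y"
    unfolding lhs_def antisym_eq_antisym_on ..
  also have "\<dots> = rhs s \<tau> x y"
    by (rule lhs_eq_rhs) fact
  also have "\<dots> = (\<Prod>j=1..s. \<Prod>k=1..s. x j + y k + \<tau> * x j * y k) *
      det (mat s s (\<lambda>(j, k). psi \<tau> (x (j + 1)) (y (k + 1))))"
    by (rule rhs_eq_det) fact
  finally show ?thesis .
qed

end
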